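(* The operator $B:C^2(\mathbf S^1)\subseteq C(\mathbf S^1)\to C(\mathbf S^1)$, $$(Bx)(\theta)=\sigma x''(\theta)+A(\theta)x(\theta)-(\alpha b_0(\theta))^{-1/\gamma}\Big(\int_{\mathbf S^1}x(\xi)b_0(\xi)d\xi\Big)\eta(\theta)^{\frac{q+\gamma-1}{\gamma}},$$ generates an immediately compact $C_0$-semigroup $(e^{tB})_{t\ge0}$ on $C(\mathbf S^1)$.
   Context: $\mathbf S^1\cong[0,2\pi]$ with endpoints identified, Lebesgue measure $d\theta$; $C(\mathbf S^1)$ has the sup-norm. $\sigma>0$, $A,\eta\in C(\mathbf S^1;(0,\infty))$, $q\ge0$, $\gamma\in(0,1)\cup(1,\infty)$, $\rho>0$ with $\rho>\lambda_0(1-\gamma)$. $\lambda_0$ is the largest (simple) eigenvalue of $Lx=\sigma x''+Ax$ on $C^2(\mathbf S^1)$ and $b_0>0$ its $L^2$-normalized eigenfunction. $\alpha=\Big[\frac{\gamma}{\rho-\lambda_0(1-\gamma)}\int_{\mathbf S^1}\eta^{\frac{q+\gamma-1}{\gamma}}b_0^{\frac{\gamma-1}{\gamma}}d\theta\Big]^\gamma$. *)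

theory Defs
  imports "HOL-Analysis.Analysis"
begin

text \<open>S^1 = [0,2pi] with endpoints identified; functions on S^1 are represented
  as 2pi-periodic functions real => real.\<close>

definition CS1 :: "(real \<Rightarrow> real) set" where
  "CS1 = {x. continuous_on UNIV x \<and> (\<forall>\<theta>. x (\<theta> + 2*pi) = x \<theta>)}"

definition supn :: "(real \<Rightarrow> real) \<Rightarrow> real" where
  "supn x = Sup ((\<lambda>\<theta>. \<bar>x \<theta>\<bar>) ` {0..2*pi})"

definition C2S1 :: "(real \<Rightarrow> real) set" where
  "C2S1 = {x. x \<in> CS1 \<and> (\<forall>\<theta>. x differentiable at \<theta>)
              \<and> (\<forall>\<theta>. deriv x differentiable at \<theta>)
              \<and> continuous_on UNIV (deriv (deriv x))}"

definition eigenpair :: "real \<Rightarrow> (real \<Rightarrow> real) \<Rightarrow> real \<Rightarrow> (real \<Rightarrow> real) \<Rightarrow> bool" where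
  "eigenpair \<sigma> A lam b \<longleftrightarrow> b \<in> C2S1 \<and> (\<exists>\<theta>. b \<theta> \<noteq> 0)
     \<and> (\<forall>\<theta>. \<sigma> * deriv (deriv b) \<theta> + A \<theta> * b \<theta> = lam * b \<theta>)"

definition alpha_const :: "real \<Rightarrow> real \<Rightarrow> real \<Rightarrow> real \<Rightarrow> (real \<Rightarrow> real) \<Rightarrow> (real \<Rightarrow> real) \<Rightarrow> real" where
  "alpha_const \<gamma> \<rho> lam0 q \<eta> b0 =
     (\<gamma> / (\<rho> - lam0 * (1 - \<gamma>)) *
      integral {0..2*pi} (\<lambda>\<theta>. \<eta> \<theta> powr ((q + \<gamma> - 1) / \<gamma>) * b0 \<theta> powr ((\<gamma> - 1) / \<gamma>))) powr \<gamma>"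

definition Bop :: "real \<Rightarrow> (real \<Rightarrow> real) \<Rightarrow> real \<Rightarrow> real \<Rightarrow> real \<Rightarrow> (real \<Rightarrow> real)
                   \<Rightarrow> (real \<Rightarrow> real) \<Rightarrow> (real \<Rightarrow> real) \<Rightarrow> (real \<Rightarrow> real)" where
  "Bop \<sigma> A \<alpha> q \<gamma> \<eta> b0 x = (\<lambda>\<theta>. \<sigma> * deriv (deriv x) \<theta> + A \<theta> * x \<theta>
      - (\<alpha> * b0 \<theta>) powr (-1 / \<gamma>) * integral {0..2*pi} (\<lambda>\<xi>. x \<xi> * b0 \<xi>)
        * \<eta> \<theta> powr ((q + \<gamma> - 1) / \<gamma>))"

definition bounded_linear_CS1 :: "((real \<Rightarrow> real) \<Rightarrow> (real \<Rightarrow> real)) \<Rightarrow> bool" where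
  "bounded_linear_CS1 S \<longleftrightarrow> (\<forall>x\<in>CS1. S x \<in> CS1)
     \<and> (\<forall>x\<in>CS1. \<forall>y\<in>CS1. \<forall>a b. S (\<lambda>\<theta>. a * x \<theta> + b * y \<theta>) = (\<lambda>\<theta>. a * S x \<theta> + b * S y \<theta>))
     \<and> (\<exists>M. \<forall>x\<in>CS1. supn (S x) \<le> M * supn x)"

definition C0_semigroup_CS1 :: "(real \<Rightarrow> (real \<Rightarrow> real) \<Rightarrow> (real \<Rightarrow> real)) \<Rightarrow> bool" where
  "C0_semigroup_CS1 T \<longleftrightarrow> (\<forall>t\<ge>0. bounded_linear_CS1 (T t))
     \<and> (\<forall>x\<in>CS1. T 0 x = x)
     \<and> (\<forall>t\<ge>0. \<forall>s\<ge>0. \<forall>x\<in>CS1. T (t + s) x = T t (T s x))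
     \<and> (\<forall>x\<in>CS1. ((\<lambda>t. supn (\<lambda>\<theta>. T t x \<theta> - x \<theta>)) \<longlongrightarrow> 0) (at_right 0))"

definition generator_CS1 :: "(real \<Rightarrow> (real \<Rightarrow> real) \<Rightarrow> (real \<Rightarrow> real)) \<Rightarrow> (real \<Rightarrow> real) set
      \<Rightarrow> ((real \<Rightarrow> real) \<Rightarrow> (real \<Rightarrow> real)) \<Rightarrow> bool" where
  "generator_CS1 T D G \<longleftrightarrow>
     (\<forall>x\<in>CS1. x \<in> D \<longleftrightarrow> (\<exists>y\<in>CS1.
         ((\<lambda>t. supn (\<lambda>\<theta>. (T t x \<theta> - x \<theta>) / t - y \<theta>)) \<longlongrightarrow> 0) (at_right 0)))
     \<and> D \<subseteq> CS1
     \<and> (\<forall>x\<in>D. G x \<in> CS1 \<and>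
         ((\<lambda>t. supn (\<lambda>\<theta>. (T t x \<theta> - x \<theta>) / t - G x \<theta>)) \<longlongrightarrow> 0) (at_right 0))"

definition compact_op_CS1 :: "((real \<Rightarrow> real) \<Rightarrow> (real \<Rightarrow> real)) \<Rightarrow> bool" where
  "compact_op_CS1 S \<longleftrightarrow> (\<forall>u :: nat \<Rightarrow> real \<Rightarrow> real. (\<forall>n. u n \<in> CS1 \<and> supn (u n) \<le> 1) \<longrightarrow>
      (\<exists>r y. strict_mono r \<and> y \<in> CS1 \<and>
         (\<lambda>n. supn (\<lambda>\<theta>. S (u (r n)) \<theta> - y \<theta>)) \<longlonglongrightarrow> 0))"

end

theory Submission
  imports Defs "HOL-Probability.Probability" "HOL-Complex_Analysis.Great_Picard"
begin

(* B is sigma d^2/dtheta^2 plus the bounded operator P x = A x - k * (integral of x b0), with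
   k = (alpha b0)^(-1/gamma) eta^((q+gamma-1)/gamma). The heat semigroup, convolution with a
   Gaussian, is a contraction C0-semigroup on C(S^1) whose generator is sigma d^2/dtheta^2 on
   C^2(S^1): Taylor expansion against the Gaussian moments gives one inclusion, and the other
   follows by solving a Poisson equation and applying the maximum principle. The bounded
   perturbation P is added through the variation-of-constants formula, solved by Picard
   iteration; it leaves the domain of the generator unchanged. For compactness at t > 0,
   write S(t) = G(eps) S(t - eps) + O(eps): the heat semigroup G(eps) maps bounded sets to
   equicontinuous ones, because translations of the Gaussian are continuous in L^1, so the
   Arzela-Ascoli theorem applies. *)

section \<open>Continuous periodic functions\<close>

lemma CS1_continuous: "x \<in> CS1 \<Longrightarrow> continuous_on UNIV x"
  by (simp add: CS1_def)

lemma CS1_periodic: "x \<in> CS1 \<Longrightarrow> x (\<theta> + 2*pi) = x \<theta>"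
  by (simp add: CS1_def)

lemma CS1_periodic_int: assumes "x \<in> CS1" shows "x (\<theta> + 2*pi * of_int k) = x \<theta>"
proof (induction k rule: int_induct[where k=0])
  case base then show ?case by simp
next
  case (step1 i)
  have "x (\<theta> + 2*pi * of_int (i+1)) = x ((\<theta> + 2*pi * of_int i) + 2*pi)"
    by (simp add: algebra_simps)
  also have "\<dots> = x \<theta>" using CS1_periodic[OF assms] step1 by simp
  finally show ?case .
next
  case (step2 i)
  have "x (\<theta> + 2*pi * of_int i) = x ((\<theta> + 2*pi * of_int (i - 1)) + 2*pi)"
    by (simp add: algebra_simps)
  also have "\<dots> = x (\<theta> + 2*pi * of_int (i - 1))" using CS1_periodic[OF assms] by simp
  finally show ?case using step2 by simp
qed

definition wrap :: "real \<Rightarrow> real" where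
  "wrap \<theta> = \<theta> - 2*pi * of_int \<lfloor>\<theta>/(2*pi)\<rfloor>"

lemma wrap_in_period: "wrap \<theta> \<in> {0..<2*pi}"
proof -
  have p: "2*pi > 0" by simp
  have "of_int \<lfloor>\<theta>/(2*pi)\<rfloor> \<le> \<theta>/(2*pi)" by simp
  then have a: "2*pi * of_int \<lfloor>\<theta>/(2*pi)\<rfloor> \<le> \<theta>"
    using pos_le_divide_eq[OF p] by (metis mult.commute)
  have "\<theta>/(2*pi) < of_int \<lfloor>\<theta>/(2*pi)\<rfloor> + 1" by linarith
  then have b: "\<theta> < 2*pi * of_int \<lfloor>\<theta>/(2*pi)\<rfloor> + 2*pi"
    using pos_divide_less_eq[OF p] by (simp add: algebra_simps)
  show ?thesis using a b by (simp add: wrap_def)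
qed

lemma CS1_wrap: "x \<in> CS1 \<Longrightarrow> x (wrap \<theta>) = x \<theta>"
  using CS1_periodic_int[of x "wrap \<theta>" "\<lfloor>\<theta>/(2*pi)\<rfloor>"] by (simp add: wrap_def)

lemma wrap_periodic: "wrap (\<theta> + 2*pi) = wrap \<theta>"
proof -
  have "(\<theta> + 2*pi) / (2*pi) = \<theta> / (2*pi) + 1" by (simp add: field_simps)
  then have "\<lfloor>(\<theta> + 2*pi) / (2*pi)\<rfloor> = \<lfloor>\<theta> / (2*pi)\<rfloor> + 1" by simp
  then show ?thesis unfolding wrap_def by (simp add: algebra_simps)
qed

lemma CS1_range_period: "x \<in> CS1 \<Longrightarrow> range x = x ` {0..2*pi}"
proof
  assume x: "x \<in> CS1"
  show "range x \<subseteq> x ` {0..2*pi}"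
  proof
    fix y assume "y \<in> range x"
    then obtain \<theta> where "y = x \<theta>" by auto
    then have "y = x (wrap \<theta>)" using CS1_wrap[OF x] by simp
    then show "y \<in> x ` {0..2*pi}" using wrap_in_period[of \<theta>] by auto
  qed
qed auto

lemma CS1_bounded: assumes "x \<in> CS1" shows "bounded (range x)"
proof -
  have "compact (x ` {0..2*pi})"
    by (rule compact_continuous_image) (use CS1_continuous[OF assms] continuous_on_subset in auto)
  then show ?thesis using CS1_range_period[OF assms] compact_imp_bounded by auto
qed

lemma CS1_in_bcontfun: "x \<in> CS1 \<Longrightarrow> x \<in> bcontfun"
  using CS1_bounded CS1_continuous by (auto simp: bcontfun_def)

lemma supn_eq_SUP: assumes "x \<in> CS1" shows "supn x = (SUP \<theta>. \<bar>x \<theta>\<bar>)"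
proof -
  have "(\<lambda>\<theta>. \<bar>x \<theta>\<bar>) ` UNIV = (\<lambda>\<theta>. \<bar>x \<theta>\<bar>) ` {0..2*pi}"
    using CS1_range_period[OF assms] by (metis image_comp image_image)
  then show ?thesis unfolding supn_def by (metis)
qed

lemma CS1_bdd_above_abs: assumes "x \<in> CS1" shows "bdd_above (range (\<lambda>\<theta>. \<bar>x \<theta>\<bar>))"
proof -
  obtain B where "\<forall>y\<in>range x. norm y \<le> B" using CS1_bounded[OF assms] bounded_iff by blast
  then show ?thesis by (auto intro!: bdd_aboveI[of _ B])
qed

lemma abs_le_supn: "x \<in> CS1 \<Longrightarrow> \<bar>x \<theta>\<bar> \<le> supn x"
  unfolding supn_eq_SUP by (rule cSUP_upper) (auto simp: CS1_bdd_above_abs)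

lemma supn_le: "x \<in> CS1 \<Longrightarrow> (\<And>\<theta>. \<bar>x \<theta>\<bar> \<le> B) \<Longrightarrow> supn x \<le> B"
  by (simp add: supn_eq_SUP cSUP_least)

lemma supn_nonneg: "x \<in> CS1 \<Longrightarrow> 0 \<le> supn x"
  using abs_le_supn[of x 0] by linarith

lemma CS1_uniformly_continuous: assumes x: "x \<in> CS1" and e: "e > 0"
  shows "\<exists>d>0. \<forall>a b. \<bar>a - b\<bar> < d \<longrightarrow> \<bar>x a - x b\<bar> < e"
proof -
  have "uniformly_continuous_on {-2*pi..4*pi} x"
    by (rule compact_uniformly_continuous) (use CS1_continuous[OF x] continuous_on_subset in auto)
  then obtain d where d: "d > 0" and dd: "\<And>a b. a \<in> {-2*pi..4*pi} \<Longrightarrow> b \<in> {-2*pi..4*pi} \<Longrightarrow> dist b a < d \<Longrightarrow> dist (x b) (x a) < e"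
    unfolding uniformly_continuous_on_def using e by metis
  show ?thesis
  proof (intro exI[of _ "min d 1"] conjI allI impI)
    show "min d 1 > 0" using d by simp
    fix a b assume ab: "\<bar>a - b\<bar> < min d 1"
    define k where "k = \<lfloor>a/(2*pi)\<rfloor>"
    define a' where "a' = a - 2*pi * of_int k"
    define b' where "b' = b - 2*pi * of_int k"
    have a'r: "a' \<in> {0..<2*pi}" using wrap_in_period[of a] by (simp add: a'_def wrap_def k_def)
    have "b' - a' = b - a" by (simp add: a'_def b'_def)
    then have "\<bar>b' - a'\<bar> < 1" "\<bar>b' - a'\<bar> < d" using ab by auto
    moreover have "pi > 3" using pi_gt3 .
    ultimately have b'r: "b' \<in> {-2*pi..4*pi}" using a'r by auto
    have "dist (x b') (x a') < e"
      by (rule dd) (use a'r b'r \<open>\<bar>b' - a'\<bar> < d\<close> pi_gt3 in \<open>auto simp: dist_real_def\<close>)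
    moreover have "x a' = x a" "x b' = x b"
      using CS1_periodic_int[OF x, of a' k] CS1_periodic_int[OF x, of b' k] by (auto simp: a'_def b'_def)
    ultimately show "\<bar>x a - x b\<bar> < e" by (simp add: dist_real_def abs_minus_commute)
  qed
qed

lemma CS1_bounded_abs: "f \<in> CS1 \<Longrightarrow> \<exists>B. \<forall>x. \<bar>f x\<bar> \<le> B"
  using abs_le_supn by blast

lemma CS1_borel_measurable: "f \<in> CS1 \<Longrightarrow> f \<in> borel_measurable borel"
  by (rule borel_measurable_continuous_onI) (simp add: CS1_def)

lemma CS1_integrable_on: "f \<in> CS1 \<Longrightarrow> f integrable_on {a..b}"
  by (rule integrable_continuous_real) (use continuous_on_subset in \<open>auto simp: CS1_def\<close>)

lemma CS1_add: "f \<in> CS1 \<Longrightarrow> g \<in> CS1 \<Longrightarrow> (\<lambda>\<theta>. f \<theta> + g \<theta>) \<in> CS1"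
  by (simp add: CS1_def continuous_on_add)

lemma CS1_minus_mean:
  assumes f: "f \<in> CS1"
  shows "(\<lambda>\<theta>. f \<theta> - integral {0..2*pi} f / (2*pi)) \<in> CS1"
    and "integral {0..2*pi} (\<lambda>\<theta>. f \<theta> - integral {0..2*pi} f / (2*pi)) = 0"
proof -
  show "(\<lambda>\<theta>. f \<theta> - integral {0..2*pi} f / (2*pi)) \<in> CS1"
    using f by (auto simp: CS1_def intro!: continuous_intros)
  have "integral {0..2*pi} (\<lambda>\<theta>. f \<theta> - integral {0..2*pi} f / (2*pi))
      = integral {0..2*pi} f - integral {0..2*pi} (\<lambda>\<theta>. integral {0..2*pi} f / (2*pi))"
    by (rule integral_diff[OF CS1_integrable_on[OF f] integrable_const_ivl])
  then show "integral {0..2*pi} (\<lambda>\<theta>. f \<theta> - integral {0..2*pi} f / (2*pi)) = 0"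
    by simp
qed

section \<open>Twice differentiable periodic functions\<close>

lemma deriv_periodic:
  fixes f :: "real \<Rightarrow> real"
  assumes per: "\<And>\<theta>. f (\<theta> + 2*pi) = f \<theta>" and dif: "\<And>\<theta>. f differentiable at \<theta>"
  shows "deriv f (\<theta> + 2*pi) = deriv f \<theta>"
proof -
  have "DERIV f (\<theta> + 2*pi) :> deriv f (\<theta> + 2*pi)"
    using dif DERIV_deriv_iff_real_differentiable by blast
  then have "DERIV (\<lambda>x. f (x + 2*pi)) \<theta> :> deriv f (\<theta> + 2*pi)"
    by (simp add: DERIV_shift)
  moreover have "(\<lambda>x. f (x + 2*pi)) = f" using per by auto
  ultimately have "DERIV f \<theta> :> deriv f (\<theta> + 2*pi)" by simp
  then show ?thesis by (rule DERIV_imp_deriv[symmetric])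
qed

lemma C2S1_CS1: "f \<in> C2S1 \<Longrightarrow> f \<in> CS1"
  by (simp add: C2S1_def)

lemma C2S1_DERIV: "f \<in> C2S1 \<Longrightarrow> DERIV f x :> deriv f x"
  using DERIV_deriv_iff_real_differentiable by (auto simp: C2S1_def)

lemma C2S1_DERIV_deriv: "f \<in> C2S1 \<Longrightarrow> DERIV (deriv f) x :> deriv (deriv f) x"
  using DERIV_deriv_iff_real_differentiable by (auto simp: C2S1_def)

lemma C2S1_deriv2_CS1:
  assumes f: "f \<in> C2S1"
  shows "(\<lambda>\<theta>. c * deriv (deriv f) \<theta>) \<in> CS1"
proof -
  have p1: "deriv f (\<theta> + 2*pi) = deriv f \<theta>" for \<theta>
    by (rule deriv_periodic) (use f in \<open>auto simp: C2S1_def CS1_def\<close>)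
  have "deriv (deriv f) (\<theta> + 2*pi) = deriv (deriv f) \<theta>" for \<theta>
    by (rule deriv_periodic) (use f p1 in \<open>auto simp: C2S1_def CS1_def\<close>)
  then have "deriv (deriv f) \<in> CS1" using f by (simp add: CS1_def C2S1_def)
  then show ?thesis by (auto simp: CS1_def intro!: continuous_intros)
qed

lemma C2S1_Taylor2:
  assumes f: "f \<in> C2S1"
  shows "\<exists>\<tau>. \<bar>\<tau>\<bar> \<le> \<bar>y\<bar> \<and> f (\<theta> - y) = f \<theta> - y * deriv f \<theta> + y\<^sup>2 / 2 * deriv (deriv f) (\<theta> + \<tau>)"
proof -
  define df where "df = (\<lambda>(m::nat) t. if m = 0 then f (\<theta> + t) else if m = 1 then deriv f (\<theta> + t) else deriv (deriv f) (\<theta> + t))"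
  have D: "\<forall>m t. m < 2 \<and> \<bar>t\<bar> \<le> \<bar>- y\<bar> \<longrightarrow> DERIV (df m) t :> df (Suc m) t"
  proof (intro allI impI)
    fix m :: nat and t :: real assume m: "m < 2 \<and> \<bar>t\<bar> \<le> \<bar>- y\<bar>"
    then consider "m = 0" | "m = 1" by linarith
    then show "DERIV (df m) t :> df (Suc m) t"
    proof cases
      case 1
      have "DERIV (\<lambda>t. f (\<theta> + t)) t :> deriv f (\<theta> + t)"
        using DERIV_shift[of f "deriv f (\<theta> + t)" t \<theta>] C2S1_DERIV[OF f, of "t + \<theta>"]
          by (simp add: add.commute)
      then show ?thesis using 1 by (simp add: df_def)
    next
      case 2
      have "DERIV (\<lambda>t. deriv f (\<theta> + t)) t :> deriv (deriv f) (\<theta> + t)"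
        using DERIV_shift[of "deriv f" "deriv (deriv f) (\<theta> + t)" t \<theta>] C2S1_DERIV_deriv[OF f, of "t + \<theta>"]
          by (simp add: add.commute)
      then show ?thesis using 2 by (simp add: df_def)
    qed
  qed
  have d0: "df 0 = (\<lambda>t. f (\<theta> + t))" by (simp add: df_def)
  obtain \<tau> where \<tau>: "\<bar>\<tau>\<bar> \<le> \<bar>- y\<bar>"
    and eq: "f (\<theta> + - y) = (\<Sum>m<2. df m 0 / fact m * (- y) ^ m) + df 2 \<tau> / fact 2 * (- y) ^ 2"
    using Maclaurin_bi_le[OF d0 D] by blast
  have "f (\<theta> - y) = f \<theta> - y * deriv f \<theta> + y\<^sup>2 / 2 * deriv (deriv f) (\<theta> + \<tau>)"
    using eq by (simp add: df_def numeral_2_eq_2 lessThan_Suc)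
  then show ?thesis using \<tau> by auto
qed

lemma C2S1_Taylor2_remainder_le:
  assumes f: "f \<in> C2S1" and M2: "\<And>x. \<bar>deriv (deriv f) x\<bar> \<le> M2" and \<delta>: "\<delta> > 0"
    and osc: "\<And>a b. \<bar>a - b\<bar> < \<delta> \<Longrightarrow> \<bar>deriv (deriv f) a - deriv (deriv f) b\<bar> \<le> \<epsilon>"
  shows "\<bar>f (\<theta> - y) - f \<theta> + y * deriv f \<theta> - y\<^sup>2 / 2 * deriv (deriv f) \<theta>\<bar>
    \<le> \<epsilon> / 2 * y\<^sup>2 + M2 / \<delta> * \<bar>y\<bar> ^ 3"
proof -
  define f2 where "f2 = deriv (deriv f)"
  obtain \<tau> where \<tau>: "\<bar>\<tau>\<bar> \<le> \<bar>y\<bar>"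
    and taylor: "f (\<theta> - y) = f \<theta> - y * deriv f \<theta> + y\<^sup>2 / 2 * f2 (\<theta> + \<tau>)"
    using C2S1_Taylor2[OF f, of y \<theta>] unfolding f2_def by blast
  have M20: "M2 \<ge> 0" and \<epsilon>0: "\<epsilon> \<ge> 0" using M2[of 0] osc[of 0 0] \<delta> by auto
  have "\<bar>f2 (\<theta> + \<tau>) - f2 \<theta>\<bar> \<le> \<epsilon> + 2 * M2 * (\<bar>y\<bar> / \<delta>)"
  proof (cases "\<bar>\<tau>\<bar> < \<delta>")
    case True
    moreover have "0 \<le> 2 * M2 * (\<bar>y\<bar> / \<delta>)" using M20 \<delta> by simp
    ultimately show ?thesis using osc[of "\<theta> + \<tau>" \<theta>] unfolding f2_def by simp
  next
    case False
    then have "1 \<le> \<bar>y\<bar> / \<delta>" using \<tau> \<delta> by simp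
    then have "2 * M2 \<le> 2 * M2 * (\<bar>y\<bar> / \<delta>)" using mult_left_mono[of 1 "\<bar>y\<bar> / \<delta>" "2 * M2"] M20
      by simp
    then show ?thesis using M2[of "\<theta> + \<tau>"] M2[of \<theta>] \<epsilon>0 unfolding f2_def by linarith
  qed
  then have "y\<^sup>2 / 2 * \<bar>f2 (\<theta> + \<tau>) - f2 \<theta>\<bar> \<le> y\<^sup>2 / 2 * (\<epsilon> + 2 * M2 * (\<bar>y\<bar> / \<delta>))"
    by (rule mult_left_mono) simp
  also have "\<dots> = \<epsilon> / 2 * y\<^sup>2 + M2 / \<delta> * \<bar>y\<bar> ^ 3"
    using \<delta> by (simp add: field_simps power2_eq_square power3_eq_cube abs_mult_self_eq)
  also have "y\<^sup>2 / 2 * \<bar>f2 (\<theta> + \<tau>) - f2 \<theta>\<bar> = \<bar>y\<^sup>2 / 2 * (f2 (\<theta> + \<tau>) - f2 \<theta>)\<bar>"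
    by (simp add: abs_mult)
  also have "y\<^sup>2 / 2 * (f2 (\<theta> + \<tau>) - f2 \<theta>) = f (\<theta> - y) - f \<theta> + y * deriv f \<theta> - y\<^sup>2 / 2 * f2 \<theta>"
    unfolding taylor by (simp add: field_simps)
  finally show ?thesis unfolding f2_def .
qed

lemma C2S1_add_const:
  assumes z: "z \<in> C2S1" shows "(\<lambda>\<theta>. z \<theta> + c) \<in> C2S1"
proof -
  have dz: "DERIV (\<lambda>\<theta>. z \<theta> + c) \<theta> :> deriv z \<theta>" for \<theta>
    using C2S1_DERIV[OF z] by (auto intro!: derivative_eq_intros)
  then have "deriv (\<lambda>\<theta>. z \<theta> + c) = deriv z" using DERIV_imp_deriv by blast
  moreover have "(\<lambda>\<theta>. z \<theta> + c) \<in> CS1"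
    using C2S1_CS1[OF z] by (auto simp: CS1_def intro!: continuous_intros)
  moreover have "(\<lambda>\<theta>. z \<theta> + c) differentiable at \<theta>" for \<theta>
    using dz real_differentiable_def by blast
  ultimately show ?thesis using z by (simp add: C2S1_def)
qed

definition primitive :: "(real \<Rightarrow> real) \<Rightarrow> real \<Rightarrow> real" where
  "primitive g \<theta> = integral {0..\<theta>} g - integral {\<theta>..0} g"

lemma primitive_eq_integral_from:
  assumes g: "continuous_on UNIV g" and a: "a \<le> 0" "a \<le> u"
  shows "primitive g u = integral {a..u} g - integral {a..0} g"
proof (cases "u \<ge> 0")
  case True
  have "integral {a..0} g + integral {0..u} g = integral {a..u} g"
    by (rule Henstock_Kurzweil_Integration.integral_combine) (use a True g in \<open>auto intro: integrable_continuous_real continuous_on_subset\<close>)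
  moreover have "integral {u..0} g = 0"
    using True by (cases "u = 0") (auto simp: integral_empty)
  ultimately show ?thesis unfolding primitive_def by simp
next
  case False
  have "integral {a..u} g + integral {u..0} g = integral {a..0} g"
    by (rule Henstock_Kurzweil_Integration.integral_combine) (use a False g in \<open>auto intro: integrable_continuous_real continuous_on_subset\<close>)
  moreover have "integral {0..u} g = 0" using False by (simp add: integral_empty)
  ultimately show ?thesis unfolding primitive_def by simp
qed

lemma primitive_has_derivative:
  assumes g: "continuous_on UNIV g"
  shows "DERIV (primitive g) \<theta> :> g \<theta>"
proof -
  define a where "a = min 0 \<theta> - 1"
  define b where "b = max 0 \<theta> + 1"
  have ab: "a < \<theta>" "\<theta> < b" "a \<le> 0" unfolding a_def b_def by auto
  have "((\<lambda>u. integral {a..u} g) has_real_derivative g \<theta>) (at \<theta> within {a..b})"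
    by (rule integral_has_real_derivative) (use g ab continuous_on_subset in auto)
  then have "((\<lambda>u. integral {a..u} g) has_real_derivative g \<theta>) (at \<theta>)"
    using at_within_Icc_at[OF ab(1,2)] by simp
  then have d: "((\<lambda>u. integral {a..u} g - integral {a..0} g) has_real_derivative g \<theta>) (at \<theta>)"
    by (auto intro!: derivative_eq_intros)
  show ?thesis
  proof (rule has_field_derivative_transform_within_open[OF d, of "{a<..}"])
    show "open {a<..}" by simp
    show "\<theta> \<in> {a<..}" using ab by simp
    fix u assume "u \<in> {a<..}"
    then show "integral {a..u} g - integral {a..0} g = primitive g u"
      using primitive_eq_integral_from[OF g, of a u] ab by simp
  qed
qed

lemma primitive_nonneg_eq: "\<theta> \<ge> 0 \<Longrightarrow> primitive g \<theta> = integral {0..\<theta>} g"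
  unfolding primitive_def by (cases "\<theta> = 0") (auto simp: integral_empty)

lemma primitive_CS1:
  assumes g: "g \<in> CS1" and m0: "integral {0..2*pi} g = 0"
  shows "primitive g \<in> CS1" "\<And>\<theta>. DERIV (primitive g) \<theta> :> g \<theta>"
proof -
  have gc: "continuous_on UNIV g" using g by (simp add: CS1_def)
  show d: "\<And>\<theta>. DERIV (primitive g) \<theta> :> g \<theta>" by (rule primitive_has_derivative[OF gc])
  have dd: "DERIV (\<lambda>\<theta>. primitive g (\<theta> + 2*pi) - primitive g \<theta>) x :> 0" for x
  proof -
    have "DERIV (\<lambda>\<theta>. primitive g (\<theta> + 2*pi)) x :> g (x + 2*pi)"
      using d[of "x + 2*pi"] by (simp add: DERIV_shift)
    then have "DERIV (\<lambda>\<theta>. primitive g (\<theta> + 2*pi) - primitive g \<theta>) x :> g (x + 2*pi) - g x"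
      using d[of x] by (rule DERIV_diff)
    then show ?thesis using CS1_periodic[OF g] by simp
  qed
  have "primitive g (\<theta> + 2*pi) - primitive g \<theta> = primitive g (0 + 2*pi) - primitive g 0" for \<theta>
  proof -
    have "\<forall>x. DERIV (\<lambda>\<theta>. primitive g (\<theta> + 2*pi) - primitive g \<theta>) x :> 0" using dd
      by blast
    from DERIV_isconst_all[OF this, of \<theta> 0] show ?thesis by simp
  qed
  moreover have "primitive g (0 + 2*pi) - primitive g 0 = 0"
    using m0 primitive_nonneg_eq[of "2*pi" g] primitive_nonneg_eq[of 0 g] by simp
  ultimately have per: "primitive g (\<theta> + 2*pi) = primitive g \<theta>" for \<theta> by simp
  have "continuous_on UNIV (primitive g)"
    using d by (meson DERIV_isCont continuous_at_imp_continuous_on)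
  then show "primitive g \<in> CS1" using per by (simp add: CS1_def)
qed

lemma C2S1_deriv2_eq:
  assumes g: "g \<in> CS1" and mean: "integral {0..2*pi} g = 0"
  obtains z where "z \<in> C2S1" "\<And>\<theta>. deriv (deriv z) \<theta> = g \<theta>"
proof -
  define F where "F = primitive g"
  have F: "F \<in> CS1" "\<And>\<theta>. DERIV F \<theta> :> g \<theta>" unfolding F_def using primitive_CS1[OF g mean]
    by auto
  define g2 where "g2 = (\<lambda>\<theta>. F \<theta> - integral {0..2*pi} F / (2*pi))"
  have g2: "g2 \<in> CS1" "integral {0..2*pi} g2 = 0" unfolding g2_def using CS1_minus_mean[OF F(1)] by auto
  define z where "z = primitive g2"
  have z: "z \<in> CS1" "\<And>\<theta>. DERIV z \<theta> :> g2 \<theta>" unfolding z_def using primitive_CS1[OF g2]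
    by auto
  have dz: "deriv z = g2" using z(2) DERIV_imp_deriv by blast
  have dg2: "DERIV g2 \<theta> :> g \<theta>" for \<theta> unfolding g2_def using F(2)[of \<theta>]
    by (auto intro!: derivative_eq_intros)
  have ddz: "deriv (deriv z) = g" unfolding dz using dg2 DERIV_imp_deriv by blast
  have "z \<in> C2S1"
    unfolding C2S1_def
  proof (intro CollectI conjI allI)
    fix \<theta>
    show "z differentiable at \<theta>" using z(2) real_differentiable_def by blast
    show "deriv z differentiable at \<theta>" unfolding dz using dg2 real_differentiable_def by blast
  qed (use z(1) g in \<open>simp_all add: ddz CS1_def\<close>)
  then show ?thesis using that ddz by simp
qed

lemma C2S1_poisson_solvable:
  assumes w: "w \<in> CS1" and \<sigma>: "\<sigma> > 0"
  shows "\<exists>z\<in>C2S1. \<forall>\<theta>. \<sigma> * deriv (deriv z) \<theta> = w \<theta> - integral {0..2*pi} w / (2*pi)"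
proof -
  define g where "g = (\<lambda>\<theta>. (w \<theta> - integral {0..2*pi} w / (2*pi)) / \<sigma>)"
  have "g \<in> CS1" unfolding g_def using w \<sigma> by (auto simp: CS1_def intro!: continuous_intros)
  moreover have "integral {0..2*pi} g = 0"
    unfolding g_def using CS1_minus_mean(2)[OF w] by (simp only: integral_divide)
  ultimately obtain z where z: "z \<in> C2S1" and z2: "\<And>\<theta>. deriv (deriv z) \<theta> = g \<theta>"
    using C2S1_deriv2_eq by blast
  have "\<sigma> * deriv (deriv z) \<theta> = w \<theta> - integral {0..2*pi} w / (2*pi)" for \<theta>
    using \<sigma> by (simp add: z2 g_def)
  then show ?thesis using z by blast
qed

section \<open>The Banach space $C(S^1)$\<close>

(* C(S^1) as the closed subspace of 2pi-periodic bounded continuous functions; apply_cper and Cper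
   translate between this type and the set CS1 used in the statement. *)

typedef cper = "{f :: real \<Rightarrow>\<^sub>C real. \<forall>\<theta>. apply_bcontfun f (\<theta> + 2*pi) = apply_bcontfun f \<theta>}"
  morphisms Rep_cper Abs_cper
  by (rule exI[of _ 0]) simp

setup_lifting type_definition_cper

instantiation cper :: real_vector
begin
lift_definition zero_cper :: cper is 0 by simp
lift_definition plus_cper :: "cper \<Rightarrow> cper \<Rightarrow> cper" is "(+)" by simp
lift_definition minus_cper :: "cper \<Rightarrow> cper \<Rightarrow> cper" is "(-)" by simp
lift_definition uminus_cper :: "cper \<Rightarrow> cper" is "uminus" by simp
lift_definition scaleR_cper :: "real \<Rightarrow> cper \<Rightarrow> cper" is "scaleR" by simp
instance
  by standard (transfer; simp add: algebra_simps scaleR_add_right scaleR_add_left)+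
end

instantiation cper :: real_normed_vector
begin
lift_definition norm_cper :: "cper \<Rightarrow> real" is norm .
lift_definition dist_cper :: "cper \<Rightarrow> cper \<Rightarrow> real" is dist .
definition sgn_cper :: "cper \<Rightarrow> cper" where "sgn_cper f = f /\<^sub>R norm f"
definition uniformity_cper :: "(cper \<times> cper) filter"
  where "uniformity_cper = (INF e\<in>{0 <..}. principal {(x, y). dist x y < e})"
definition open_cper :: "cper set \<Rightarrow> bool"
  where "open_cper S = (\<forall>x\<in>S. \<forall>\<^sub>F (x', y) in uniformity. x' = x \<longrightarrow> y \<in> S)"
instance
proof
  fix x y :: cper and a :: real
  show "dist x y = norm (x - y)" by transfer (simp add: dist_norm)
  show "norm (x + y) \<le> norm x + norm y" by transfer (simp add: norm_triangle_ineq)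
  show "norm (a *\<^sub>R x) = \<bar>a\<bar> * norm x" by transfer simp
  show "(norm x = 0) = (x = 0)" by transfer simp
qed (simp_all add: sgn_cper_def uniformity_cper_def open_cper_def)
end

instance cper :: banach
proof
  fix f :: "nat \<Rightarrow> cper"
  assume c: "Cauchy f"
  have "Cauchy (\<lambda>n. Rep_cper (f n))"
    using c unfolding Cauchy_def by (simp add: dist_cper.rep_eq)
  then obtain l where l: "(\<lambda>n. Rep_cper (f n)) \<longlonglongrightarrow> l"
    using convergent_def complete_UNIV convergent_eq_Cauchy by blast
  have per: "\<forall>\<theta>. apply_bcontfun l (\<theta> + 2*pi) = apply_bcontfun l \<theta>"
  proof
    fix \<theta>
    have u: "uniform_limit UNIV (\<lambda>n. Rep_cper (f n)) l sequentially"
      by (rule tendsto_bcontfun_uniform_limit[OF l])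
    have "(\<lambda>n. apply_bcontfun (Rep_cper (f n)) (\<theta> + 2*pi)) \<longlonglongrightarrow> l (\<theta> + 2*pi)"
      by (rule tendsto_uniform_limitI[OF u]) simp
    moreover have "(\<lambda>n. apply_bcontfun (Rep_cper (f n)) (\<theta> + 2*pi)) \<longlonglongrightarrow> l \<theta>"
      using Rep_cper[of "f _"] tendsto_uniform_limitI[OF u, of \<theta>] by simp
    ultimately show "apply_bcontfun l (\<theta> + 2*pi) = apply_bcontfun l \<theta>"
      using LIMSEQ_unique by blast
  qed
  have "f \<longlonglongrightarrow> Abs_cper l"
    unfolding tendsto_iff dist_cper.rep_eq using l per Abs_cper_inverse[of l]
    by (simp add: tendsto_iff)
  then show "convergent f" by (rule convergentI)
qed

definition apply_cper :: "cper \<Rightarrow> real \<Rightarrow> real" where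
  "apply_cper x = apply_bcontfun (Rep_cper x)"

definition Cper :: "(real \<Rightarrow> real) \<Rightarrow> cper" where
  "Cper f = Abs_cper (Bcontfun f)"

lemma apply_cper_Cper: assumes "f \<in> CS1" shows "apply_cper (Cper f) = f"
proof -
  have b: "f \<in> bcontfun" by (rule CS1_in_bcontfun[OF assms])
  have "apply_bcontfun (Bcontfun f) = f" using Bcontfun_inverse[OF b] .
  then show ?thesis unfolding apply_cper_def Cper_def using Abs_cper_inverse[of "Bcontfun f"] CS1_periodic[OF assms]
    by simp
qed

lemma apply_cper_CS1: "apply_cper x \<in> CS1"
  using Rep_cper[of x] by (auto simp: CS1_def apply_cper_def)

lemma Cper_apply_cper: "Cper (apply_cper x) = x"
  by (simp add: Cper_def apply_cper_def apply_bcontfun_inverse Rep_cper_inverse)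

lemma cper_eqI: "(\<And>\<theta>. apply_cper x \<theta> = apply_cper y \<theta>) \<Longrightarrow> x = y"
  by (metis Cper_apply_cper ext)

lemma apply_cper_add[simp]: "apply_cper (x + y) \<theta> = apply_cper x \<theta> + apply_cper y \<theta>"
  by (simp add: apply_cper_def plus_cper.rep_eq)

lemma apply_cper_diff[simp]: "apply_cper (x - y) \<theta> = apply_cper x \<theta> - apply_cper y \<theta>"
  by (simp add: apply_cper_def minus_cper.rep_eq)

lemma apply_cper_scaleR[simp]: "apply_cper (a *\<^sub>R x) \<theta> = a * apply_cper x \<theta>"
  by (simp add: apply_cper_def scaleR_cper.rep_eq)

lemma norm_cper_eq_SUP: "norm x = (SUP \<theta>. \<bar>apply_cper x \<theta>\<bar>)"
  by (simp add: norm_cper.rep_eq norm_bcontfun_def dist_bcontfun.rep_eq apply_cper_def)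

lemma abs_apply_cper_le_norm: "\<bar>apply_cper x \<theta>\<bar> \<le> norm x"
  using norm_bounded[of "Rep_cper x" \<theta>] by (simp add: apply_cper_def norm_cper.rep_eq)

lemma norm_cper_bound: "(\<And>\<theta>. \<bar>apply_cper x \<theta>\<bar> \<le> B) \<Longrightarrow> norm x \<le> B"
  using norm_bound[of "Rep_cper x" B] by (simp add: apply_cper_def norm_cper.rep_eq)

lemma supn_apply_cper: "supn (apply_cper x) = norm x"
  using supn_eq_SUP[OF apply_cper_CS1] norm_cper_eq_SUP by simp

lemma continuous_on_apply_cper: "continuous_on S (apply_cper x)"
  by (simp add: apply_cper_def)

lemma apply_cper_add_fun: "apply_cper (x + y) = (\<lambda>\<theta>. apply_cper x \<theta> + apply_cper y \<theta>)"
  by (rule ext) simp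

lemma apply_cper_scaleR_fun: "apply_cper (c *\<^sub>R x) = (\<lambda>\<theta>. c * apply_cper x \<theta>)"
  by (rule ext) simp

lemma apply_cper_divide: "apply_cper (x /\<^sub>R h) \<theta> = apply_cper x \<theta> / h"
  by (simp add: divide_inverse mult.commute)

definition cper_one :: cper where "cper_one = Cper (\<lambda>\<theta>. 1)"

lemma apply_cper_one: "apply_cper cper_one = (\<lambda>\<theta>. 1)"
  unfolding cper_one_def by (rule apply_cper_Cper) (simp add: CS1_def)

section \<open>Contraction semigroups and their bounded perturbations\<close>

lemma continuous_on_atLeast_from_Icc:
  fixes f :: "real \<Rightarrow> 'a::metric_space"
  assumes "\<And>T. T \<ge> 0 \<Longrightarrow> continuous_on {0..T} f"
  shows "continuous_on {0..} f"
  unfolding continuous_on_iff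
proof (intro ballI allI impI)
  fix t0 e :: real assume t0: "t0 \<in> {0..}" and e: "0 < e"
  have "continuous_on {0..t0+1} f" using assms t0 by simp
  then obtain d where d: "d > 0" and dd: "\<forall>t\<in>{0..t0+1}. dist t t0 < d \<longrightarrow> dist (f t) (f t0) < e"
    unfolding continuous_on_iff using t0 e by (metis atLeastAtMost_iff atLeast_iff le_add_same_cancel1 zero_le_one)
  show "\<exists>d>0. \<forall>t\<in>{0..}. dist t t0 < d \<longrightarrow> dist (f t) (f t0) < e"
    by (rule exI[of _ "min d 1"]) (use d dd in \<open>auto simp: dist_real_def\<close>)
qed

lemma continuous_on_Icc_bounded:
  fixes v :: "real \<Rightarrow> 'a::real_normed_vector"
  assumes "continuous_on {0..T} v"
  obtains M where "M > 0" "\<And>s. s \<in> {0..T} \<Longrightarrow> norm (v s) \<le> M"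
proof -
  have "compact (v ` {0..T})" by (rule compact_continuous_image[OF assms]) simp
  then obtain M where "M > 0" "\<forall>y\<in>v ` {0..T}. norm y \<le> M"
    using compact_imp_bounded bounded_pos by metis
  then show ?thesis using that by auto
qed

lemma integral_reverse_power:
  assumes "t \<ge> 0"
  shows "integral {0..t} (\<lambda>r. (t - r) ^ n) = t ^ Suc n / Suc n"
proof -
  define F where "F = (\<lambda>r. - ((t - r) ^ (Suc n)) / real (Suc n))"
  have "((\<lambda>r. (t - r) ^ n) has_integral (F t - F 0)) {0..t}"
  proof (rule fundamental_theorem_of_calculus)
    show "0 \<le> t" by fact
    fix r assume "r \<in> {0..t}"
    show "(F has_vector_derivative (t - r) ^ n) (at r within {0..t})"
      unfolding has_real_derivative_iff_has_vector_derivative[symmetric] F_def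
      by (auto intro!: derivative_eq_intros simp del: of_nat_Suc power_Suc)
  qed
  then show ?thesis by (simp add: integral_unique F_def)
qed

lemma mult_divide_add1_less: "0 \<le> x \<Longrightarrow> 0 < e \<Longrightarrow> x * (e / (x + 1)) < (e::real)"
  by (simp add: field_simps)

lemma norm_integral_average_le:
  fixes f :: "real \<Rightarrow> 'a::banach"
  assumes f: "continuous_on {0..h} f" and h: "h > 0"
    and near: "\<And>r. r \<in> {0..h} \<Longrightarrow> norm (f r - c) \<le> \<eta>"
  shows "norm (integral {0..h} f /\<^sub>R h - c) \<le> \<eta>"
proof -
  have "integral {0..h} f - h *\<^sub>R c = integral {0..h} (\<lambda>r. f r - c)"
    using integral_diff[OF integrable_continuous_real[OF f] integrable_const_ivl, of c] h by simp
  also have "norm \<dots> \<le> \<eta> * (h - 0)"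
    by (rule integral_bound) (use h f near in \<open>auto intro!: continuous_intros\<close>)
  finally have "norm (integral {0..h} f - h *\<^sub>R c) \<le> \<eta> * h" by simp
  moreover have "integral {0..h} f /\<^sub>R h - c = (integral {0..h} f - h *\<^sub>R c) /\<^sub>R h"
    using h by (simp add: algebra_simps)
  then have "norm (integral {0..h} f /\<^sub>R h - c) = norm (integral {0..h} f - h *\<^sub>R c) / h"
    using h by (simp add: divide_inverse_commute)
  ultimately show ?thesis using h by (simp add: pos_divide_le_eq)
qed

locale contraction_semigroup =
  fixes G :: "real \<Rightarrow> 'a::banach \<Rightarrow> 'a"
  assumes bounded_linear_G: "t \<ge> 0 \<Longrightarrow> bounded_linear (G t)"
    and norm_G_le: "t \<ge> 0 \<Longrightarrow> norm (G t x) \<le> norm x"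
    and G_0: "G 0 x = x"
    and G_semigroup: "t \<ge> 0 \<Longrightarrow> s \<ge> 0 \<Longrightarrow> G (t + s) x = G t (G s x)"
    and G_strongly_continuous: "((\<lambda>t. G t x) \<longlongrightarrow> x) (at_right 0)"
begin

lemma G_diff: "t \<ge> 0 \<Longrightarrow> G t (a - b) = G t a - G t b"
  using bounded_linear_G linear_diff bounded_linear.linear by blast

lemma G_add: "t \<ge> 0 \<Longrightarrow> G t (a + b) = G t a + G t b"
  using bounded_linear_G linear_add bounded_linear.linear by blast

lemma G_scale: "t \<ge> 0 \<Longrightarrow> G t (c *\<^sub>R a) = c *\<^sub>R G t a"
  using bounded_linear_G linear_scale bounded_linear.linear by blast

lemma G_near_identity:
  assumes "e > 0" obtains d where "d > 0" "\<And>h. 0 \<le> h \<Longrightarrow> h < d \<Longrightarrow> norm (G h x - x) < e"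
proof -
  obtain d where "d > 0" "\<And>h. 0 < h \<Longrightarrow> h < d \<Longrightarrow> dist (G h x) x < e"
    using tendstoD[OF G_strongly_continuous assms] unfolding eventually_at_right_field by auto
  then show ?thesis using that assms by (metis G_0 dist_norm le_less right_minus_eq norm_zero)
qed

lemma norm_G_shift_le:
  assumes "0 \<le> a" "a \<le> b"
  shows "norm (G b x - G a x) \<le> norm (G (b - a) x - x)"
proof -
  have "G b x - G a x = G a (G (b - a) x - x)" using G_semigroup[of a "b - a"] G_diff assms by simp
  then show ?thesis using norm_G_le assms by simp
qed

lemma continuous_on_G_orbit: "continuous_on {0..} (\<lambda>t. G t x)"
  unfolding continuous_on_iff
proof (intro ballI allI impI)
  fix t0 e :: real assume t0: "t0 \<in> {0..}" and e: "0 < e"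
  obtain d where d: "d > 0" and dd: "\<And>h. 0 \<le> h \<Longrightarrow> h < d \<Longrightarrow> norm (G h x - x) < e"
    using G_near_identity[OF e] by blast
  have "dist (G t x) (G t0 x) < e" if t: "t \<in> {0..}" "dist t t0 < d" for t
  proof (cases "t0 \<le> t")
    case True
    then show ?thesis using norm_G_shift_le[of t0 t x] dd[of "t - t0"] t t0
      by (simp add: dist_norm dist_real_def)
  next
    case False
    then show ?thesis using norm_G_shift_le[of t t0 x] dd[of "t0 - t"] t t0
      by (simp add: dist_norm dist_real_def norm_minus_commute)
  qed
  then show "\<exists>d>0. \<forall>t\<in>{0..}. dist t t0 < d \<longrightarrow> dist (G t x) (G t0 x) < e" using d
    by blast
qed

lemma continuous_on_G_compose:
  assumes v: "continuous_on S v" and tau: "continuous_on S \<tau>" and pos: "\<And>s. s \<in> S \<Longrightarrow> \<tau> s \<ge> 0"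
  shows "continuous_on S (\<lambda>s. G (\<tau> s) (v s))"
  unfolding continuous_on_def
proof
  fix s0 assume s0: "s0 \<in> S"
  have a: "((\<lambda>s. G (\<tau> s) (v s0)) \<longlongrightarrow> G (\<tau> s0) (v s0)) (at s0 within S)"
  proof -
    have "continuous_on S (\<lambda>s. G (\<tau> s) (v s0))"
      by (rule continuous_on_compose2[OF continuous_on_G_orbit tau]) (use pos in auto)
    then show ?thesis using s0 continuous_on_def by blast
  qed
  have b: "((\<lambda>s. G (\<tau> s) (v s) - G (\<tau> s) (v s0)) \<longlongrightarrow> 0) (at s0 within S)"
  proof (rule Lim_null_comparison)
    show "\<forall>\<^sub>F s in at s0 within S. norm (G (\<tau> s) (v s) - G (\<tau> s) (v s0)) \<le> norm (v s - v s0)"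
      unfolding eventually_at_filter
      by (rule eventuallyI) (metis G_diff norm_G_le pos)
    have "(v \<longlongrightarrow> v s0) (at s0 within S)" using v s0 continuous_on_def by blast
    then show "((\<lambda>s. norm (v s - v s0)) \<longlongrightarrow> 0) (at s0 within S)"
      using tendsto_norm_zero_iff Lim_null by (metis LIM_zero)
  qed
  show "((\<lambda>s. G (\<tau> s) (v s)) \<longlongrightarrow> G (\<tau> s0) (v s0)) (at s0 within S)"
    using tendsto_add[OF a b] by simp
qed

lemma G_telescope:
  fixes n :: nat
  assumes h: "h \<ge> 0" and fixed: "\<And>t. t \<ge> 0 \<Longrightarrow> G t w = w"
  shows "G (real n * h) v - v - (real n * h) *\<^sub>R w = (\<Sum>k<n. G (real k * h) (G h v - v - h *\<^sub>R w))"
proof (induction n)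
  case 0 show ?case by (simp add: G_0)
next
  case (Suc n)
  have nh: "real n * h \<ge> 0" using h by simp
  have "G (real (Suc n) * h) v = G (real n * h) (G h v)"
    using G_semigroup[OF nh h] by (simp add: algebra_simps)
  moreover have "G (real n * h) (G h v - v - h *\<^sub>R w) = G (real n * h) (G h v) - G (real n * h) v - h *\<^sub>R w"
    using G_diff[OF nh] G_scale[OF nh] fixed[OF nh] by simp
  ultimately show ?case using Suc.IH by (simp add: algebra_simps scaleR_add_left)
qed

lemma G_affine_orbit:
  assumes lim: "((\<lambda>h. (G h v - v) /\<^sub>R h) \<longlongrightarrow> w) (at_right 0)"
    and fixed: "\<And>t. t \<ge> 0 \<Longrightarrow> G t w = w" and t: "t \<ge> 0"
  shows "G t v = v + t *\<^sub>R w"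
proof -
  have bound: "norm (G t v - v - t *\<^sub>R w) \<le> t * e" if e: "e > 0" for e
  proof (cases "t = 0")
    case True then show ?thesis by (simp add: G_0)
  next
    case False
    obtain d where d: "d > 0" and dd: "\<And>h. 0 < h \<Longrightarrow> h < d \<Longrightarrow> norm ((G h v - v) /\<^sub>R h - w) < e"
      using tendstoD[OF lim e] unfolding eventually_at_right_field dist_norm by auto
    obtain n :: nat where n: "n > t / d" using reals_Archimedean2 by blast
    have npos: "n > 0" using n t d False by (metis divide_nonneg_pos gr0I leD of_nat_0)
    define h where "h = t / n"
    have hpos: "h > 0" and hd: "h < d"
      unfolding h_def using t False npos n d by (auto simp: divide_less_eq mult.commute pos_divide_less_eq)
    have "G h v - v - h *\<^sub>R w = h *\<^sub>R ((G h v - v) /\<^sub>R h - w)"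
      using hpos by (simp add: algebra_simps)
    then have step: "norm (G h v - v - h *\<^sub>R w) \<le> h * e"
      using dd[OF hpos hd] hpos by (simp add: less_imp_le)
    have "G t v - v - t *\<^sub>R w = (\<Sum>k<n. G (k * h) (G h v - v - h *\<^sub>R w))"
      using G_telescope[OF less_imp_le[OF hpos] fixed, of n v] npos by (simp add: h_def)
    then have "norm (G t v - v - t *\<^sub>R w) \<le> (\<Sum>k<n. norm (G (k * h) (G h v - v - h *\<^sub>R w)))"
      by (simp add: norm_sum)
    also have "\<dots> \<le> (\<Sum>k<n. h * e)"
      using norm_G_le step hpos by (intro sum_mono) (meson order_trans of_nat_0_le_iff zero_le_mult_iff less_imp_le)
    also have "\<dots> = t * e" unfolding h_def using npos by simp
    finally show ?thesis .
  qed
  have "norm (G t v - v - t *\<^sub>R w) \<le> 0"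
  proof (rule field_le_epsilon)
    fix e :: real assume e: "e > 0"
    have "norm (G t v - v - t *\<^sub>R w) \<le> t * (e / (t + 1))" using t e by (intro bound) simp
    also have "\<dots> < e" by (rule mult_divide_add1_less[OF t e])
    finally show "norm (G t v - v - t *\<^sub>R w) \<le> 0 + e" by simp
  qed
  then show ?thesis by (simp add: algebra_simps)
qed

lemma G_fixed_if_quotient_limit_fixed:
  assumes lim: "((\<lambda>h. (G h v - v) /\<^sub>R h) \<longlongrightarrow> w) (at_right 0)"
    and fixed: "\<And>t. t \<ge> 0 \<Longrightarrow> G t w = w" and t: "t \<ge> 0"
  shows "G t v = v"
proof -
  have affine: "G s v - v = s *\<^sub>R w" if "s \<ge> 0" for s
    using G_affine_orbit[OF lim fixed that] by simp
  have "w = 0"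
  proof (rule ccontr)
    assume "w \<noteq> 0"
    define s where "s = (2 * norm v + 1) / norm w"
    have s: "s \<ge> 0" and sw: "s * norm w = 2 * norm v + 1"
      using \<open>w \<noteq> 0\<close> by (simp_all add: s_def)
    have "norm (G s v - v) \<le> 2 * norm v"
      using norm_G_le[OF s, of v] norm_triangle_ineq4[of "G s v" v] by linarith
    then show False using affine[OF s] s sw by simp
  qed
  then show ?thesis using affine[OF t] by simp
qed

end

locale bounded_perturbation = contraction_semigroup G for G :: "real \<Rightarrow> 'a::banach \<Rightarrow> 'a" +
  fixes P :: "'a \<Rightarrow> 'a" and K :: real
  assumes bounded_linear_P: "bounded_linear P" and K_pos: "K > 0" and norm_P_le: "norm (P x) \<le> K * norm x"
begin

(* The perturbed semigroup is mild x t, the fixed point of u t = G t x + duhamel u t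
   (variation of constants for u' = (A + P) u, A the generator of G), found by Picard iteration. *)

definition duhamel :: "(real \<Rightarrow> 'a) \<Rightarrow> real \<Rightarrow> 'a" where
  "duhamel v t = integral {0..t} (\<lambda>r. G r (P (v (t - r))))"

lemma continuous_on_P: "continuous_on S v \<Longrightarrow> continuous_on S (\<lambda>s. P (v s))"
  using bounded_linear_P bounded_linear.continuous_on by blast

lemma continuous_on_duhamel_integrand:
  assumes v: "continuous_on {0..} v" and t: "t \<le> t'"
  shows "continuous_on {0..t} (\<lambda>r. G r (P (v (t' - r))))"
proof (rule continuous_on_G_compose)
  have "continuous_on {0..t} (\<lambda>r. v (t' - r))"
    by (rule continuous_on_compose2[OF v]) (use t in \<open>auto intro!: continuous_intros\<close>)
  then show "continuous_on {0..t} (\<lambda>r. P (v (t' - r)))" by (rule continuous_on_P)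
qed (auto intro!: continuous_intros)

lemma duhamel_integrable:
  assumes v: "continuous_on {0..} v" and t: "t \<le> t'"
  shows "(\<lambda>r. G r (P (v (t' - r)))) integrable_on {0..t}"
  by (rule integrable_continuous_real[OF continuous_on_duhamel_integrand[OF v t]])

lemma norm_G_P_le: "r \<ge> 0 \<Longrightarrow> norm (G r (P y)) \<le> K * norm y"
  using norm_G_le norm_P_le order_trans by blast

lemma duhamel_linear:
  assumes v: "continuous_on {0..} v" and w: "continuous_on {0..} w" and t: "t \<ge> 0"
  shows "duhamel (\<lambda>s. a *\<^sub>R v s + b *\<^sub>R w s) t = a *\<^sub>R duhamel v t + b *\<^sub>R duhamel w t"
proof -
  have eq: "G r (P (a *\<^sub>R v (t - r) + b *\<^sub>R w (t - r))) = a *\<^sub>R G r (P (v (t - r))) + b *\<^sub>R G r (P (w (t - r)))"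
    if "r \<in> {0..t}" for r
    using that bounded_linear_P G_add G_scale
    by (simp add: bounded_linear.linear linear_add linear_scale)
  have "duhamel (\<lambda>s. a *\<^sub>R v s + b *\<^sub>R w s) t = integral {0..t} (\<lambda>r. a *\<^sub>R G r (P (v (t - r))) + b *\<^sub>R G r (P (w (t - r))))"
    unfolding duhamel_def by (rule integral_cong) (use eq in auto)
  also have "\<dots> = a *\<^sub>R duhamel v t + b *\<^sub>R duhamel w t"
    unfolding duhamel_def
    by (subst integral_add) (auto intro!: integrable_on_cmult_iff[THEN iffD2] duhamel_integrable[OF v] duhamel_integrable[OF w] integrable_cmul)
  finally show ?thesis .
qed

lemma duhamel_diff:
  assumes v: "continuous_on {0..} v" and w: "continuous_on {0..} w" and t: "t \<ge> 0"
  shows "duhamel (\<lambda>s. v s - w s) t = duhamel v t - duhamel w t"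
  using duhamel_linear[OF v w t, of 1 "-1"] by simp

lemma norm_duhamel_le:
  assumes v: "continuous_on {0..} v" and t: "t \<ge> 0"
    and b: "\<And>s. s \<in> {0..t} \<Longrightarrow> norm (v s) \<le> C * s ^ n"
  shows "norm (duhamel v t) \<le> K * C * t ^ Suc n / Suc n"
proof -
  have "norm (duhamel v t) \<le> integral {0..t} (\<lambda>r. K * C * (t - r) ^ n)"
    unfolding duhamel_def
  proof (rule integral_norm_bound_integral)
    show "(\<lambda>r. G r (P (v (t - r)))) integrable_on {0..t}" by (rule duhamel_integrable[OF v]) simp
    show "(\<lambda>r. K * C * (t - r) ^ n) integrable_on {0..t}"
      by (rule integrable_continuous_real) (auto intro!: continuous_intros)
    fix r assume r: "r \<in> {0..t}"
    have "norm (G r (P (v (t - r)))) \<le> K * norm (v (t - r))" using norm_G_P_le r by simp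
    also have "\<dots> \<le> K * (C * (t - r) ^ n)" using b[of "t - r"] r K_pos by (intro mult_left_mono) auto
    finally show "norm (G r (P (v (t - r)))) \<le> K * C * (t - r) ^ n" by simp
  qed
  also have "\<dots> = K * C * t ^ Suc n / Suc n"
    using integral_reverse_power[OF t, of n] by simp
  finally show ?thesis .
qed

lemma norm_duhamel_diff_le:
  assumes v: "continuous_on {0..} v" and t: "0 \<le> t" "t \<le> t'"
    and eta: "\<And>r. r \<in> {0..t} \<Longrightarrow> norm (v (t' - r) - v (t - r)) \<le> \<eta>"
    and M: "\<And>s. s \<in> {0..t'} \<Longrightarrow> norm (v s) \<le> M"
  shows "norm (duhamel v t' - duhamel v t) \<le> t * (K * \<eta>) + (t' - t) * (K * M)"
proof -
  define f' where "f' = (\<lambda>r. G r (P (v (t' - r))))"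
  define f where "f = (\<lambda>r. G r (P (v (t - r))))"
  have cont_f': "continuous_on {0..t'} f'" unfolding f'_def by (rule continuous_on_duhamel_integrand[OF v]) simp
  have cont_f: "continuous_on {0..t} f" unfolding f_def by (rule continuous_on_duhamel_integrand[OF v]) simp
  have cont_f'_init: "continuous_on {0..t} f'" using cont_f' continuous_on_subset t by fastforce
  have cont_f'_tail: "continuous_on {t..t'} f'" using cont_f' continuous_on_subset t by fastforce
  have "duhamel v t' = integral {0..t} f' + integral {t..t'} f'"
    unfolding duhamel_def f'_def[symmetric]
    by (rule Henstock_Kurzweil_Integration.integral_combine[symmetric]) (use t cont_f' integrable_continuous_real in auto)
  moreover have "duhamel v t = integral {0..t} f" unfolding duhamel_def f_def ..
  ultimately have "duhamel v t' - duhamel v t = integral {0..t} (\<lambda>r. f' r - f r) + integral {t..t'} f'"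
    using integral_diff[OF integrable_continuous_real[OF cont_f'_init] integrable_continuous_real[OF cont_f]] by simp
  moreover have "norm (integral {0..t} (\<lambda>r. f' r - f r)) \<le> (K * \<eta>) * (t - 0)"
  proof (rule integral_bound)
    show "continuous_on {0..t} (\<lambda>r. f' r - f r)" using cont_f cont_f'_init by (intro continuous_intros)
    fix r assume r: "r \<in> {0..t}"
    have "f' r - f r = G r (P (v (t' - r) - v (t - r)))"
      unfolding f'_def f_def using r G_diff bounded_linear_P by (simp add: linear_diff bounded_linear.linear)
    then have "norm (f' r - f r) \<le> K * norm (v (t' - r) - v (t - r))" using norm_G_P_le r by simp
    also have "\<dots> \<le> K * \<eta>" using eta[OF r] K_pos by simp
    finally show "norm (f' r - f r) \<le> K * \<eta>" .
  qed (use t in auto)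
  moreover have "norm (integral {t..t'} f') \<le> (K * M) * (t' - t)"
  proof (rule integral_bound)
    fix r assume r: "r \<in> {t..t'}"
    have "norm (f' r) \<le> K * norm (v (t' - r))" unfolding f'_def using norm_G_P_le r t by simp
    also have "\<dots> \<le> K * M" using M[of "t' - r"] r t K_pos by simp
    finally show "norm (f' r) \<le> K * M" .
  qed (use t cont_f'_tail in auto)
  ultimately show ?thesis
    by (smt (verit, best) mult.commute norm_triangle_ineq)
qed

lemma uniformly_continuous_on_duhamel:
  assumes v: "continuous_on {0..} v" and T: "T \<ge> 0"
  shows "uniformly_continuous_on {0..T} (duhamel v)"
proof -
  have vT: "continuous_on {0..T} v" using v continuous_on_subset by fastforce
  obtain M where M: "M > 0" "\<And>s. s \<in> {0..T} \<Longrightarrow> norm (v s) \<le> M"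
    using continuous_on_Icc_bounded[OF vT] by blast
  show ?thesis
    unfolding uniformly_continuous_on_def
  proof (intro allI impI)
    fix e :: real assume e: "e > 0"
    define c where "c = e / 2 / (T * K + 1)"
    have c: "c > 0" unfolding c_def using e T K_pos by (simp add: add_nonneg_pos)
    obtain d1 where d1: "d1 > 0"
      and dd1: "\<And>a b. a \<in> {0..T} \<Longrightarrow> b \<in> {0..T} \<Longrightarrow> dist b a < d1 \<Longrightarrow> dist (v b) (v a) < c"
      using compact_uniformly_continuous[OF vT compact_Icc] c unfolding uniformly_continuous_on_def by metis
    define d where "d = min d1 (e / 2 / (K * M + 1))"
    have close: "norm (duhamel v b - duhamel v a) < e"
      if ab: "a \<in> {0..T}" "b \<in> {0..T}" "a \<le> b" "b - a < d" for a b
    proof -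
      have "norm (duhamel v b - duhamel v a) \<le> a * (K * c) + (b - a) * (K * M)"
      proof (rule norm_duhamel_diff_le[OF v])
        fix r assume "r \<in> {0..a}"
        then have "dist (v (b - r)) (v (a - r)) < c" using ab by (intro dd1) (auto simp: dist_real_def d_def)
        then show "norm (v (b - r) - v (a - r)) \<le> c" by (simp add: dist_norm)
      qed (use ab M in auto)
      also have "a * (K * c) \<le> (T * K) * c" using ab c K_pos by (simp add: mult_right_mono)
      also have "(T * K) * c < e / 2"
        unfolding c_def using mult_divide_add1_less[of "T * K" "e / 2"] T K_pos e by simp
      also have "(b - a) * (K * M) \<le> e / 2 / (K * M + 1) * (K * M)"
        using ab K_pos M by (intro mult_right_mono) (auto simp: d_def)
      also have "\<dots> < e / 2"
        using mult_divide_add1_less[of "K * M" "e / 2"] K_pos M e by (simp add: mult.commute)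
      finally show ?thesis by simp
    qed
    show "\<exists>d>0. \<forall>a\<in>{0..T}. \<forall>b\<in>{0..T}. dist b a < d \<longrightarrow> dist (duhamel v b) (duhamel v a) < e"
    proof (intro exI[of _ d] conjI ballI impI)
      show "d > 0" unfolding d_def using d1 e K_pos M by (simp add: add_nonneg_pos)
      fix a b assume "a \<in> {0..T}" "b \<in> {0..T}" "dist b a < d"
      then show "dist (duhamel v b) (duhamel v a) < e"
        using close[of a b] close[of b a] by (cases "a \<le> b") (auto simp: dist_norm dist_real_def norm_minus_commute)
    qed
  qed
qed

lemma continuous_on_duhamel: "continuous_on {0..} v \<Longrightarrow> continuous_on {0..} (duhamel v)"
  by (rule continuous_on_atLeast_from_Icc)
    (rule uniformly_continuous_imp_continuous[OF uniformly_continuous_on_duhamel])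

lemma duhamel_0: "duhamel v 0 = 0"
  by (simp add: duhamel_def)

lemma duhamel_uniform_limit:
  assumes f: "\<And>n. continuous_on {0..} (f n)" and g: "continuous_on {0..} g"
    and lim: "uniform_limit {0..t} f g sequentially" and t: "t \<ge> 0"
  shows "(\<lambda>n. duhamel (f n) t) \<longlonglongrightarrow> duhamel g t"
proof (rule tendstoI)
  fix e :: real assume e: "e > 0"
  define e' where "e' = e / (t + 1) / K"
  have e': "e' > 0" unfolding e'_def using e K_pos t by simp
  show "\<forall>\<^sub>F n in sequentially. dist (duhamel (f n) t) (duhamel g t) < e"
    using uniform_limitD[OF lim e']
  proof eventually_elim
    case (elim n)
    have "norm (duhamel (\<lambda>s. f n s - g s) t) \<le> K * e' * t ^ Suc 0 / Suc 0"
      by (rule norm_duhamel_le[OF continuous_on_diff[OF f g] t]) (use elim in \<open>auto simp: dist_norm less_imp_le\<close>)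
    also have "\<dots> = t * (e / (t + 1))" unfolding e'_def using K_pos by simp
    also have "\<dots> < e" by (rule mult_divide_add1_less[OF t e])
    finally show ?case using duhamel_diff[OF f g t] by (simp add: dist_norm)
  qed
qed

lemma duhamel_fixed_point_eq_0:
  assumes v: "continuous_on {0..} v" and eq: "\<And>t. t \<ge> 0 \<Longrightarrow> v t = duhamel v t" and t0: "t0 \<ge> 0"
  shows "v t0 = 0"
proof -
  have vT: "continuous_on {0..t0} v" using v continuous_on_subset by fastforce
  obtain M where M: "M > 0" "\<And>s. s \<in> {0..t0} \<Longrightarrow> norm (v s) \<le> M"
    using continuous_on_Icc_bounded[OF vT] by blast
  have b: "\<forall>s\<in>{0..t0}. norm (v s) \<le> M * K ^ n / fact n * s ^ n" for n
  proof (induction n)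
    case 0 then show ?case using M by simp
  next
    case (Suc n)
    show ?case
    proof
      fix s assume s: "s \<in> {0..t0}"
      have "norm (v s) = norm (duhamel v s)" using eq s by simp
      also have "\<dots> \<le> K * (M * K ^ n / fact n) * s ^ Suc n / Suc n"
        by (rule norm_duhamel_le[OF v]) (use s Suc.IH in auto)
      also have "\<dots> = M * K ^ Suc n / fact (Suc n) * s ^ Suc n"
      proof -
        have f: "(fact (Suc n) :: real) = real (Suc n) * fact n" by (rule fact_Suc)
        have p: "(0::real) < real (Suc n) * fact n" by (intro mult_pos_pos) auto
        show ?thesis unfolding f using p by (simp only: power_Suc) (simp add: divide_simps)
      qed
      finally show "norm (v s) \<le> M * K ^ Suc n / fact (Suc n) * s ^ Suc n" .
    qed
  qed
  have "(\<lambda>n. inverse (fact n) * (K * t0) ^ n) \<longlonglongrightarrow> 0"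
    using summable_LIMSEQ_zero[OF summable_exp[of "K * t0"]] by simp
  then have "(\<lambda>n. M * (inverse (fact n) * (K * t0) ^ n)) \<longlonglongrightarrow> M * 0"
    by (rule tendsto_mult[OF tendsto_const])
  moreover have "norm (v t0) \<le> M * (inverse (fact n) * (K * t0) ^ n)" for n
    using b[of n] t0 by (auto simp: power_mult_distrib divide_inverse mult_ac)
  ultimately have "norm (v t0) \<le> 0"
    by (intro tendsto_le[OF _ _ tendsto_const, where F=sequentially]) (auto)
  then show ?thesis by simp
qed

lemma duhamel_shift:
  assumes v: "continuous_on {0..} v" and t: "t \<ge> 0" and s: "s \<ge> 0"
  shows "duhamel v (t + s) = duhamel (\<lambda>r. v (r + s)) t + G t (duhamel v s)"
proof -
  define f where "f = (\<lambda>r. G r (P (v (t + s - r))))"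
  have fc: "continuous_on {0..t+s} f" unfolding f_def by (rule continuous_on_duhamel_integrand[OF v]) simp
  have "duhamel v (t + s) = integral {0..t} f + integral {t..t+s} f"
    unfolding duhamel_def f_def[symmetric]
    by (rule Henstock_Kurzweil_Integration.integral_combine[symmetric]) (use t s fc integrable_continuous_real in auto)
  moreover have "integral {0..t} f = duhamel (\<lambda>r. v (r + s)) t"
    unfolding duhamel_def f_def by (rule integral_cong) (simp add: algebra_simps)
  moreover have "integral {t..t+s} f = integral {0..s} (\<lambda>r. f (r + t))"
    using integral_shift_real_ivl[where f=f and a=t and b="t + s" and c=t] by simp
  moreover have "f (r + t) = G t (G r (P (v (s - r))))" if "r \<in> {0..s}" for r
    using G_semigroup[of t r] t that by (simp add: f_def add.commute)
  then have "integral {0..s} (\<lambda>r. f (r + t)) = integral {0..s} (G t \<circ> (\<lambda>r. G r (P (v (s - r)))))"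
    by (intro integral_cong) simp
  moreover have "\<dots> = G t (duhamel v s)"
    unfolding duhamel_def by (rule integral_linear[OF duhamel_integrable[OF v] bounded_linear_G[OF t]]) simp
  ultimately show ?thesis by simp
qed

fun picard :: "'a \<Rightarrow> nat \<Rightarrow> real \<Rightarrow> 'a" where
  "picard x 0 = (\<lambda>t. G t x)"
| "picard x (Suc n) = (\<lambda>t. G t x + duhamel (picard x n) t)"

declare picard.simps[simp del]

lemma picard_0: "picard x 0 t = G t x" by (simp add: picard.simps)

lemma picard_Suc: "picard x (Suc n) t = G t x + duhamel (picard x n) t" by (simp add: picard.simps)

lemma continuous_on_picard: "continuous_on {0..} (picard x n)"
proof (induction n)
  case 0 show ?case by (simp add: picard.simps continuous_on_G_orbit)
next
  case (Suc n)
  have "continuous_on {0..} (\<lambda>t. G t x + duhamel (picard x n) t)"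
    by (intro continuous_on_add continuous_on_G_orbit continuous_on_duhamel[OF Suc.IH, unfolded comp_def])
  then show ?case by (simp add: picard.simps)
qed

definition picard_incr :: "'a \<Rightarrow> nat \<Rightarrow> real \<Rightarrow> 'a" where
  "picard_incr x n t = picard x (Suc n) t - picard x n t"

lemma continuous_on_picard_incr: "continuous_on {0..} (picard_incr x n)"
  unfolding picard_incr_def by (intro continuous_intros continuous_on_picard)

lemma picard_incr_Suc: assumes "t \<ge> 0" shows "picard_incr x (Suc n) t = duhamel (picard_incr x n) t"
proof -
  have "picard_incr x (Suc n) t = duhamel (picard x (Suc n)) t - duhamel (picard x n) t"
    unfolding picard_incr_def picard_Suc[of x "Suc n"] picard_Suc[of x n] by simp
  also have "\<dots> = duhamel (\<lambda>s. picard x (Suc n) s - picard x n s) t"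
    by (rule duhamel_diff[OF continuous_on_picard continuous_on_picard assms, symmetric])
  also have "(\<lambda>s. picard x (Suc n) s - picard x n s) = picard_incr x n" by (simp add: picard_incr_def[abs_def])
  finally show ?thesis .
qed

lemma norm_picard_incr_le: "t \<ge> 0 \<Longrightarrow> norm (picard_incr x n t) \<le> norm x * K ^ Suc n * t ^ Suc n / fact (Suc n)"
proof (induction n arbitrary: t)
  case 0
  have "norm (picard_incr x 0 t) = norm (duhamel (picard x 0) t)" by (simp add: picard_incr_def picard_Suc picard_0)
  also have "\<dots> \<le> K * norm x * t ^ Suc 0 / Suc 0"
    by (rule norm_duhamel_le[OF continuous_on_picard \<open>t \<ge> 0\<close>]) (auto intro: norm_G_le simp: picard_0)
  finally show ?case by (simp add: algebra_simps)
next
  case (Suc n)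
  have "norm (picard_incr x (Suc n) t) = norm (duhamel (picard_incr x n) t)" using picard_incr_Suc Suc.prems by simp
  also have "\<dots> \<le> K * (norm x * K ^ Suc n / fact (Suc n)) * t ^ Suc (Suc n) / Suc (Suc n)"
    by (rule norm_duhamel_le[OF continuous_on_picard_incr \<open>t \<ge> 0\<close>]) (use Suc.IH in auto)
  also have "\<dots> = norm x * K ^ Suc (Suc n) * t ^ Suc (Suc n) / fact (Suc (Suc n))"
  proof -
    have f: "(fact (Suc (Suc n)) :: real) = real (Suc (Suc n)) * fact (Suc n)" by (rule fact_Suc)
    have p: "(0::real) < real (Suc (Suc n)) * fact (Suc n)" by (intro mult_pos_pos) auto
    show ?thesis unfolding f using p by (simp only: power_Suc) (simp add: divide_simps)
  qed
  finally show ?case .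
qed

lemma picard_eq_sum: "picard x n t = G t x + (\<Sum>k<n. picard_incr x k t)"
proof (induction n)
  case 0 show ?case by (simp add: picard_0)
next
  case (Suc n)
  have "picard x (Suc n) t = picard x n t + picard_incr x n t" by (simp add: picard_incr_def)
  then show ?case using Suc.IH by simp
qed

definition mild :: "'a \<Rightarrow> real \<Rightarrow> 'a" where
  "mild x t = G t x + (\<Sum>k. picard_incr x k t)"

lemma summable_exp_tail: "summable (\<lambda>k. norm x * K ^ Suc k * T ^ Suc k / fact (Suc k))"
proof -
  have "summable (\<lambda>k. (K * T) ^ k / fact k)"
    using summable_exp[of "K * T"] by (simp add: divide_inverse mult.commute)
  then have "summable (\<lambda>k. (K * T) ^ (k + 1) / fact (k + 1))"
    by (rule summable_ignore_initial_segment)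
  then have "summable (\<lambda>k. (K * T) ^ Suc k / fact (Suc k))"
    by (simp only: Suc_eq_plus1)
  then have "summable (\<lambda>k. norm x * ((K * T) ^ Suc k / fact (Suc k)))" by (rule summable_mult)
  then show ?thesis unfolding power_mult_distrib by (simp only: mult.assoc times_divide_eq_right)
qed

lemma uniform_limit_picard_incr_sums:
  assumes "T \<ge> 0"
  shows "uniform_limit {0..T} (\<lambda>n t. \<Sum>k<n. picard_incr x k t) (\<lambda>t. \<Sum>k. picard_incr x k t) sequentially"
proof (rule Weierstrass_m_test[OF _ summable_exp_tail])
  fix n t assume t: "t \<in> {0..T}"
  have "norm (picard_incr x n t) \<le> norm x * K ^ Suc n * t ^ Suc n / fact (Suc n)" using norm_picard_incr_le t
    by simp
  also have "\<dots> \<le> norm x * K ^ Suc n * T ^ Suc n / fact (Suc n)"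
    using t K_pos by (intro divide_right_mono mult_left_mono power_mono) auto
  finally show "norm (picard_incr x n t) \<le> norm x * K ^ Suc n * T ^ Suc n / fact (Suc n)" .
qed

lemma uniform_limit_picard:
  assumes "T \<ge> 0"
  shows "uniform_limit {0..T} (picard x) (mild x) sequentially"
proof -
  have "uniform_limit {0..T} (\<lambda>n t. G t x + (\<Sum>k<n. picard_incr x k t)) (\<lambda>t. G t x + (\<Sum>k. picard_incr x k t)) sequentially"
    using uniform_limit_add[OF uniform_limit_const[where S="{0..T}" and c="\<lambda>t. G t x" and f=sequentially] uniform_limit_picard_incr_sums[OF assms]] .
  moreover have "picard x = (\<lambda>n t. G t x + (\<Sum>k<n. picard_incr x k t))"
    by (intro ext) (rule picard_eq_sum)
  moreover have "mild x = (\<lambda>t. G t x + (\<Sum>k. picard_incr x k t))"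
    by (intro ext) (simp add: mild_def)
  ultimately show ?thesis by simp
qed

lemma continuous_on_mild: "continuous_on {0..} (mild x)"
proof (rule continuous_on_atLeast_from_Icc)
  fix T :: real assume T: "T \<ge> 0"
  show "continuous_on {0..T} (mild x)"
  proof (rule uniform_limit_theorem[OF _ uniform_limit_picard[OF T]])
    show "\<forall>\<^sub>F n in sequentially. continuous_on {0..T} (picard x n)"
      by (intro always_eventually allI continuous_on_subset[OF continuous_on_picard]) auto
  qed simp
qed

lemma mild_eq: assumes t: "t \<ge> 0" shows "mild x t = G t x + duhamel (mild x) t"
proof -
  have "(\<lambda>n. picard x n t) \<longlonglongrightarrow> mild x t"
    by (rule tendsto_uniform_limitI[OF uniform_limit_picard[OF t]]) (use t in simp)
  then have "(\<lambda>n. picard x (Suc n) t) \<longlonglongrightarrow> mild x t" by (rule LIMSEQ_Suc)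
  moreover have "(\<lambda>n. picard x (Suc n) t) \<longlonglongrightarrow> G t x + duhamel (mild x) t"
    unfolding picard_Suc
    by (intro tendsto_add tendsto_const duhamel_uniform_limit continuous_on_picard continuous_on_mild
        uniform_limit_picard t)
  ultimately show ?thesis by (rule LIMSEQ_unique)
qed

lemma mild_0: "mild x 0 = x"
  using mild_eq[of 0 x] by (simp add: G_0 duhamel_0)

lemma mild_unique:
  assumes w: "continuous_on {0..} w" and eq: "\<And>t. t \<ge> 0 \<Longrightarrow> w t = G t y + duhamel w t"
    and t: "t \<ge> 0"
  shows "w t = mild y t"
proof -
  define v where "v = (\<lambda>t. w t - mild y t)"
  have vc: "continuous_on {0..} v" unfolding v_def by (intro continuous_intros w continuous_on_mild)
  have "v t = duhamel v t" if t: "t \<ge> 0" for t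
  proof -
    have "v t = duhamel w t - duhamel (mild y) t" unfolding v_def using eq[OF t] mild_eq[OF t, of y] by simp
    also have "\<dots> = duhamel v t" unfolding v_def by (rule duhamel_diff[OF w continuous_on_mild t, symmetric])
    finally show ?thesis .
  qed
  then show ?thesis using duhamel_fixed_point_eq_0[OF vc _ t] by (simp add: v_def)
qed

lemma mild_linear:
  assumes t: "t \<ge> 0"
  shows "mild (a *\<^sub>R x + b *\<^sub>R y) t = a *\<^sub>R mild x t + b *\<^sub>R mild y t"
proof (rule mild_unique[symmetric, OF _ _ t])
  show "continuous_on {0..} (\<lambda>s. a *\<^sub>R mild x s + b *\<^sub>R mild y s)"
    by (intro continuous_intros continuous_on_mild)
  fix s :: real assume s: "s \<ge> 0"
  show "a *\<^sub>R mild x s + b *\<^sub>R mild y s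
      = G s (a *\<^sub>R x + b *\<^sub>R y) + duhamel (\<lambda>s. a *\<^sub>R mild x s + b *\<^sub>R mild y s) s"
    using mild_eq[OF s, of x] mild_eq[OF s, of y] G_add[OF s] G_scale[OF s]
      duhamel_linear[OF continuous_on_mild continuous_on_mild s, of a x b y]
    by (simp add: algebra_simps)
qed

lemma norm_mild_le:
  assumes t: "t \<ge> 0"
  shows "norm (mild x t) \<le> norm x * exp (K * t)"
proof -
  define B where "B = (\<lambda>k. norm x * K ^ Suc k * t ^ Suc k / fact (Suc k))"
  have sB: "summable B" unfolding B_def by (rule summable_exp_tail)
  have Db: "norm (picard_incr x k t) \<le> B k" for k unfolding B_def using norm_picard_incr_le[OF t] .
  have sD: "summable (\<lambda>k. norm (picard_incr x k t))"
    by (rule summable_comparison_test[OF _ sB]) (use Db in auto)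
  have "norm (\<Sum>k. picard_incr x k t) \<le> (\<Sum>k. norm (picard_incr x k t))" by (rule summable_norm[OF sD])
  also have "\<dots> \<le> (\<Sum>k. B k)" by (rule suminf_le[OF Db sD sB])
  also have "(\<Sum>k. B k) = norm x * (exp (K * t) - 1)"
  proof -
    have "(\<lambda>n. (K * t) ^ n / fact n) sums exp (K * t)"
      using exp_converges[of "K * t"] by (simp add: divide_inverse mult.commute)
    then have "(\<lambda>n. (K * t) ^ Suc n / fact (Suc n)) sums (exp (K * t) - 1)"
      using sums_Suc_iff[of "\<lambda>n. (K * t) ^ n / fact n" "exp (K * t) - 1"] by simp
    then have "(\<lambda>n. norm x * ((K * t) ^ Suc n / fact (Suc n))) sums (norm x * (exp (K * t) - 1))"
      by (rule sums_mult)
    then have "B sums (norm x * (exp (K * t) - 1))"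
      unfolding B_def power_mult_distrib by (simp only: mult.assoc times_divide_eq_right)
    then show ?thesis by (rule sums_unique[symmetric])
  qed
  finally have a: "norm (\<Sum>k. picard_incr x k t) \<le> norm x * (exp (K * t) - 1)" .
  have "norm (mild x t) \<le> norm (G t x) + norm (\<Sum>k. picard_incr x k t)" unfolding mild_def
    by (rule norm_triangle_ineq)
  also have "\<dots> \<le> norm x + norm x * (exp (K * t) - 1)" using norm_G_le[OF t, of x] a by linarith
  finally show ?thesis by (simp add: algebra_simps)
qed

lemma norm_mild_le_exp:
  assumes "norm x \<le> 1" "0 \<le> s" "s \<le> t"
  shows "norm (mild x s) \<le> exp (K * t)"
proof -
  have "norm (mild x s) \<le> norm x * exp (K * s)" using norm_mild_le assms by simp
  also have "\<dots> \<le> 1 * exp (K * t)" using assms K_pos by (intro mult_mono) auto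
  finally show ?thesis by simp
qed

lemma mild_semigroup:
  assumes t: "t \<ge> 0" and s: "s \<ge> 0"
  shows "mild x (t + s) = mild (mild x s) t"
proof (rule mild_unique[OF _ _ t])
  show "continuous_on {0..} (\<lambda>t. mild x (t + s))"
    by (rule continuous_on_compose2[OF continuous_on_mild]) (use s in \<open>auto intro!: continuous_intros\<close>)
  fix r :: real assume r: "r \<ge> 0"
  have "mild x (r + s) = G (r + s) x + duhamel (mild x) (r + s)" using mild_eq r s by simp
  also have "\<dots> = G r (G s x + duhamel (mild x) s) + duhamel (\<lambda>t. mild x (t + s)) r"
    using duhamel_shift[OF continuous_on_mild r s] G_semigroup[OF r s] G_add[OF r] by simp
  also have "G s x + duhamel (mild x) s = mild x s" using mild_eq[OF s] by simp
  finally show "mild x (r + s) = G r (mild x s) + duhamel (\<lambda>t. mild x (t + s)) r" .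
qed

lemma mild_tendsto_0: "((\<lambda>h. mild x h) \<longlongrightarrow> x) (at_right 0)"
proof -
  have "((\<lambda>h. mild x h) \<longlongrightarrow> mild x 0) (at 0 within {0..})"
    using continuous_on_mild[of x] continuous_on_def by (metis atLeast_iff order_refl)
  then have "((\<lambda>h. mild x h) \<longlongrightarrow> mild x 0) (at 0 within {0<..})"
    by (rule tendsto_within_subset) auto
  then show ?thesis by (simp add: mild_0)
qed

lemma mild_minus_G_quotient_tendsto: "((\<lambda>h. (mild x h - G h x) /\<^sub>R h) \<longlongrightarrow> P x) (at_right 0)"
proof (rule tendstoI)
  fix e :: real assume e: "e > 0"
  obtain d1 where d1: "d1 > 0" and dd1: "\<And>h. 0 \<le> h \<Longrightarrow> h < d1 \<Longrightarrow> norm (mild x h - x) < e / 4 / K"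
  proof -
    obtain d where "d > 0" "\<And>h. 0 < h \<Longrightarrow> h < d \<Longrightarrow> dist (mild x h) x < e / 4 / K"
      using tendstoD[OF mild_tendsto_0, of "e / 4 / K" x] e K_pos unfolding eventually_at_right_field by auto
    then show ?thesis using that e K_pos
      by (metis dist_norm le_less mild_0 norm_zero right_minus_eq divide_pos_pos zero_less_numeral)
  qed
  obtain d2 where d2: "d2 > 0" and dd2: "\<And>h. 0 \<le> h \<Longrightarrow> h < d2 \<Longrightarrow> norm (G h (P x) - P x) < e / 4"
    using G_near_identity[of "e / 4" "P x"] e by auto
  have "norm ((mild x h - G h x) /\<^sub>R h - P x) \<le> e / 2" if h: "0 < h" "h < min d1 d2" for h
  proof -
    have "mild x h - G h x = integral {0..h} (\<lambda>r. G r (P (mild x (h - r))))"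
      using mild_eq[of h x] h by (simp add: duhamel_def)
    moreover have near: "norm (G r (P (mild x (h - r))) - P x) \<le> e / 2" if r: "r \<in> {0..h}" for r
    proof -
      have split: "G r (P (mild x (h - r))) - P x = G r (P (mild x (h - r) - x)) + (G r (P x) - P x)"
        using r G_diff bounded_linear_P by (simp add: linear_diff bounded_linear.linear)
      have "norm (G r (P (mild x (h - r) - x))) \<le> K * (e / 4 / K)"
        using norm_G_P_le[of r "mild x (h - r) - x"] dd1[of "h - r"] r h K_pos
        by (smt (verit) atLeastAtMost_iff mult_left_mono)
      moreover have "norm (G r (P x) - P x) \<le> e / 4" using dd2[of r] r h by simp
      ultimately show ?thesis
        unfolding split using K_pos norm_triangle_ineq[of "G r (P (mild x (h - r) - x))" "G r (P x) - P x"]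
        by simp
    qed
    ultimately show ?thesis
      using norm_integral_average_le[OF continuous_on_duhamel_integrand[OF continuous_on_mild order_refl] h(1) near]
      by simp
  qed
  then show "\<forall>\<^sub>F h in at_right 0. dist ((mild x h - G h x) /\<^sub>R h) (P x) < e"
    unfolding eventually_at_right_field dist_norm using d1 d2 e
    by (intro exI[of _ "min d1 d2"]) (auto intro: le_less_trans[of _ "e / 2"])
qed

lemma norm_mild_minus_G_shift_le:
  assumes e: "0 \<le> \<epsilon>" "\<epsilon> \<le> t"
  shows "norm (mild x t - G \<epsilon> (mild x (t - \<epsilon>))) \<le> \<epsilon> * K * exp (K * t) * norm x"
proof -
  define y where "y = mild x (t - \<epsilon>)"
  have "mild x t = mild y \<epsilon>" unfolding y_def using mild_semigroup[of \<epsilon> "t - \<epsilon>" x] e by simp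
  also have "\<dots> = G \<epsilon> y + duhamel (mild y) \<epsilon>" using mild_eq e by simp
  finally have a: "mild x t - G \<epsilon> y = duhamel (mild y) \<epsilon>" by simp
  have "norm (duhamel (mild y) \<epsilon>) \<le> K * (norm y * exp (K * \<epsilon>)) * \<epsilon> ^ Suc 0 / Suc 0"
  proof (rule norm_duhamel_le[OF continuous_on_mild e(1)])
    fix s assume s: "s \<in> {0..\<epsilon>}"
    have "norm (mild y s) \<le> norm y * exp (K * s)" using norm_mild_le s by simp
    also have "\<dots> \<le> norm y * exp (K * \<epsilon>)" using s K_pos by (intro mult_left_mono) auto
    finally show "norm (mild y s) \<le> norm y * exp (K * \<epsilon>) * s ^ 0" by simp
  qed
  also have "\<dots> \<le> K * (norm x * exp (K * (t - \<epsilon>)) * exp (K * \<epsilon>)) * \<epsilon>"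
    using norm_mild_le[of "t - \<epsilon>" x] e K_pos unfolding y_def by (simp add: mult_left_mono mult_right_mono)
  also have "\<dots> = \<epsilon> * K * (exp (K * (t - \<epsilon>)) * exp (K * \<epsilon>)) * norm x"
    by (simp add: algebra_simps)
  also have "exp (K * (t - \<epsilon>)) * exp (K * \<epsilon>) = exp (K * t)"
    by (simp add: mult_exp_exp algebra_simps)
  finally show ?thesis using a y_def by simp
qed

end

section \<open>The heat semigroup on the circle\<close>

lemma borel_measurable_reflect:
  fixes f :: "real \<Rightarrow> real"
  assumes "continuous_on UNIV f" shows "(\<lambda>y. f (\<theta> - y)) \<in> borel_measurable borel"
proof -
  have "(\<lambda>y::real. \<theta> - y) \<in> borel_measurable borel" by simp
  then show ?thesis by (rule borel_measurable_continuous_on[OF assms])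
qed

lemma integral_pos_continuous:
  fixes \<phi> :: "real \<Rightarrow> real"
  assumes c: "continuous_on UNIV \<phi>" and nn: "\<And>y. \<phi> y \<ge> 0" and int: "integrable lborel \<phi>"
    and pos: "\<phi> y1 > 0"
  shows "(\<integral>y. \<phi> y \<partial>lborel) > 0"
proof -
  define c where "c = \<phi> y1 / 2"
  have cpos: "c > 0" unfolding c_def using pos by simp
  obtain \<delta> where d: "\<delta> > 0" and dd: "\<And>y. dist y y1 < \<delta> \<Longrightarrow> dist (\<phi> y) (\<phi> y1) < c"
    using c cpos unfolding continuous_on_iff by (metis UNIV_I)
  have "c * indicator {y1 - \<delta>/2 .. y1 + \<delta>/2} y \<le> \<phi> y" for y
  proof (cases "y \<in> {y1 - \<delta>/2 .. y1 + \<delta>/2}")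
    case True
    then have "dist y y1 < \<delta>" using d by (auto simp: dist_real_def)
    then have "dist (\<phi> y) (\<phi> y1) < c" by (rule dd)
    then have "\<phi> y1 - c < \<phi> y" by (auto simp: dist_real_def abs_less_iff)
    then show ?thesis using True unfolding c_def by simp
  next
    case False then show ?thesis using nn by simp
  qed
  then have "(\<integral>y. c * indicator {y1 - \<delta>/2 .. y1 + \<delta>/2} y \<partial>lborel) \<le> (\<integral>y. \<phi> y \<partial>lborel)"
    by (intro integral_mono int) (use d in \<open>auto intro!: integrable_mult_right integrable_real_indicator\<close>)
  moreover have "(\<integral>y. c * indicator {y1 - \<delta>/2 .. y1 + \<delta>/2} y \<partial>lborel) = c * \<delta>"
    using d by simp
  moreover have "c * \<delta> > 0" using cpos d by simp
  ultimately show ?thesis by linarith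
qed

lemma abs_diff_le_modulus_quadratic:
  fixes f :: "real \<Rightarrow> real"
  assumes B: "\<And>x. \<bar>f x\<bar> \<le> B" and \<delta>: "\<delta> > 0" and osc: "\<And>a b. \<bar>a - b\<bar> < \<delta> \<Longrightarrow> \<bar>f a - f b\<bar> \<le> \<eta>"
  shows "\<bar>f (\<theta> - y) - f \<theta>\<bar> \<le> \<eta> + 2 * B / \<delta>\<^sup>2 * y\<^sup>2"
proof (cases "\<bar>y\<bar> < \<delta>")
  case True
  then have "\<bar>f (\<theta> - y) - f \<theta>\<bar> \<le> \<eta>" by (intro osc) auto
  moreover have "0 \<le> 2 * B / \<delta>\<^sup>2 * y\<^sup>2" using B[of 0] by simp
  ultimately show ?thesis by linarith
next
  case False
  then have "\<delta>\<^sup>2 \<le> y\<^sup>2" using \<delta>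
    by (metis abs_ge_zero abs_of_pos not_less power2_abs power_mono)
  then have "1 \<le> y\<^sup>2 / \<delta>\<^sup>2" using \<delta> by simp
  have "\<bar>f (\<theta> - y) - f \<theta>\<bar> \<le> 2 * B" using B[of "\<theta> - y"] B[of \<theta>] by linarith
  also have "\<dots> \<le> 2 * B * (y\<^sup>2 / \<delta>\<^sup>2)"
    using mult_left_mono[OF \<open>1 \<le> y\<^sup>2 / \<delta>\<^sup>2\<close>, of "2 * B"] B[of 0] by simp
  finally show ?thesis using osc[of \<theta> \<theta>] \<delta> by simp
qed

(* The heat semigroup exp (t * sigma * d^2/dtheta^2) acts on periodic functions by convolution,
   over the whole real line, with the Gaussian of variance 2 * sigma * t. *)

locale heat_circle =
  fixes \<sigma> :: real
  assumes \<sigma>pos: "\<sigma> > 0"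
begin

definition sd :: "real \<Rightarrow> real" where "sd t = sqrt (2 * \<sigma> * t)"

definition heat_kernel :: "real \<Rightarrow> real \<Rightarrow> real" where
  "heat_kernel t y = normal_density 0 (sd t) y"

definition heat :: "real \<Rightarrow> (real \<Rightarrow> real) \<Rightarrow> real \<Rightarrow> real" where
  "heat t f \<theta> = (if t \<le> 0 then f \<theta> else \<integral>y. heat_kernel t y * f (\<theta> - y) \<partial>lborel)"

lemma sd_pos: "t > 0 \<Longrightarrow> sd t > 0"
  unfolding sd_def using \<sigma>pos by simp

lemma sd_sq: "t > 0 \<Longrightarrow> (sd t)\<^sup>2 = 2 * \<sigma> * t"
  unfolding sd_def using \<sigma>pos by simp

lemma sd_add: "t > 0 \<Longrightarrow> s > 0 \<Longrightarrow> sqrt ((sd s)\<^sup>2 + (sd t)\<^sup>2) = sd (t + s)"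
  using sd_sq[of s] sd_sq[of t] by (simp add: sd_def algebra_simps)

lemma heat_kernel_nonneg: "heat_kernel t y \<ge> 0"
  by (simp add: heat_kernel_def)

lemma heat_kernel_pos: "t > 0 \<Longrightarrow> heat_kernel t y > 0"
  by (simp add: heat_kernel_def normal_density_pos sd_pos)

lemma integrable_heat_kernel: "t > 0 \<Longrightarrow> integrable lborel (heat_kernel t)"
  unfolding heat_kernel_def[abs_def] using integrable_normal_density[OF sd_pos] by simp

lemma integral_heat_kernel: "t > 0 \<Longrightarrow> (\<integral>y. heat_kernel t y \<partial>lborel) = 1"
  unfolding heat_kernel_def using integral_normal_density[OF sd_pos] by simp

lemma heat_kernel_measurable[measurable]: "heat_kernel t \<in> borel_measurable borel"
  unfolding heat_kernel_def[abs_def] by simp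

lemma continuous_on_heat_kernel: assumes t: "t > 0" shows "continuous_on UNIV (heat_kernel t)"
proof -
  have "sd t \<noteq> 0" using sd_pos[OF t] by simp
  then show ?thesis unfolding heat_kernel_def[abs_def] normal_density_def by (auto intro!: continuous_intros)
qed

lemma integrable_heat_kernel_moment1: "t > 0 \<Longrightarrow> integrable lborel (\<lambda>y. heat_kernel t y * y)"
  using integrable_normal_moment[OF sd_pos, of t 0 1] unfolding heat_kernel_def by simp

lemma heat_kernel_moment1: "t > 0 \<Longrightarrow> (\<integral>y. heat_kernel t y * y \<partial>lborel) = 0"
  using integral_normal_moment_odd[OF sd_pos, of t 0 0] unfolding heat_kernel_def by simp

lemma integrable_heat_kernel_moment2: "t > 0 \<Longrightarrow> integrable lborel (\<lambda>y. heat_kernel t y * y\<^sup>2)"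
  using integrable_normal_moment[OF sd_pos, of t 0 2] unfolding heat_kernel_def by simp

lemma heat_kernel_moment2: "t > 0 \<Longrightarrow> (\<integral>y. heat_kernel t y * y\<^sup>2 \<partial>lborel) = 2 * \<sigma> * t"
proof -
  assume t: "t > 0"
  have "(\<integral>y. normal_density 0 (sd t) y * (y - 0) ^ (2 * 1) \<partial>lborel) = fact (2 * 1) / ((2 / (sd t)\<^sup>2) ^ 1 * fact 1)"
    by (rule integral_normal_moment_even) (rule sd_pos[OF t])
  then show ?thesis using sd_sq[OF t] sd_pos[OF t] by (simp add: heat_kernel_def power2_eq_square)
qed

lemma integrable_heat_kernel_abs_moment3: "t > 0 \<Longrightarrow> integrable lborel (\<lambda>y. heat_kernel t y * \<bar>y\<bar> ^ 3)"
  using integrable_normal_moment_abs[OF sd_pos, of t 0 3] unfolding heat_kernel_def by simp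

lemma heat_kernel_abs_moment3_le: "t > 0 \<Longrightarrow> (\<integral>y. heat_kernel t y * \<bar>y\<bar> ^ 3 \<partial>lborel) \<le> 2 * (sd t) ^ 3"
proof -
  assume t: "t > 0"
  have "(\<integral>y. heat_kernel t y * \<bar>y\<bar> ^ 3 \<partial>lborel) = 2 ^ 1 * sd t ^ (2 * 1 + 1) * fact 1 * sqrt (2 / pi)"
    using integral_normal_moment_abs_odd[OF sd_pos[OF t], of 0 1] unfolding heat_kernel_def by simp
  also have "\<dots> \<le> 2 * sd t ^ 3 * 1"
  proof -
    have "sqrt (2 / pi) \<le> 1" using pi_gt3 by simp
    then show ?thesis using sd_pos[OF t] by simp
  qed
  finally show ?thesis by simp
qed

lemma integrable_heat_kernel_mult:
  assumes f: "continuous_on UNIV f" and B: "\<And>x. \<bar>f x\<bar> \<le> B" and t: "t > 0"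
  shows "integrable lborel (\<lambda>y. heat_kernel t y * f (\<theta> - y))"
proof (rule Bochner_Integration.integrable_bound[where f="\<lambda>y. B * heat_kernel t y"])
  show "integrable lborel (\<lambda>y. B * heat_kernel t y)" using integrable_heat_kernel[OF t] by simp
  have "(\<lambda>y. heat_kernel t y * f (\<theta> - y)) \<in> borel_measurable borel"
    using borel_measurable_reflect[OF f] heat_kernel_measurable by (rule borel_measurable_times[rotated])
  then show "(\<lambda>y. heat_kernel t y * f (\<theta> - y)) \<in> borel_measurable lborel" by simp
  show "AE y in lborel. norm (heat_kernel t y * f (\<theta> - y)) \<le> norm (B * heat_kernel t y)"
  proof (rule AE_I2)
    fix y
    have "norm (heat_kernel t y * f (\<theta> - y)) = heat_kernel t y * \<bar>f (\<theta> - y)\<bar>" using heat_kernel_nonneg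
      by (simp add: abs_mult)
    also have "\<dots> \<le> heat_kernel t y * B" using B heat_kernel_nonneg by (intro mult_left_mono) auto
    also have "\<dots> \<le> norm (B * heat_kernel t y)" using abs_ge_self[of "B * heat_kernel t y"]
      by (simp add: mult.commute)
    finally show "norm (heat_kernel t y * f (\<theta> - y)) \<le> norm (B * heat_kernel t y)" .
  qed
qed

lemma abs_heat_le:
  assumes f: "continuous_on UNIV f" and B: "\<And>x. \<bar>f x\<bar> \<le> B"
  shows "\<bar>heat t f \<theta>\<bar> \<le> B"
proof (cases "t \<le> 0")
  case True then show ?thesis using B by (simp add: heat_def)
next
  case False
  then have t: "t > 0" by simp
  have "\<bar>\<integral>y. heat_kernel t y * f (\<theta> - y) \<partial>lborel\<bar> \<le> (\<integral>y. B * heat_kernel t y \<partial>lborel)"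
  proof (rule integral_abs_bound_integral)
    show "integrable lborel (\<lambda>y. heat_kernel t y * f (\<theta> - y))"
      by (rule integrable_heat_kernel_mult[OF f B t])
    show "integrable lborel (\<lambda>y. B * heat_kernel t y)" using integrable_heat_kernel[OF t] by simp
    fix y
    have "heat_kernel t y * \<bar>f (\<theta> - y)\<bar> \<le> heat_kernel t y * B" using B[of "\<theta> - y"] heat_kernel_nonneg[of t y]
      by (rule mult_left_mono)
    then show "\<bar>heat_kernel t y * f (\<theta> - y)\<bar> \<le> B * heat_kernel t y"
      using heat_kernel_nonneg[of t y] by (simp add: abs_mult mult.commute)
  qed
  also have "\<dots> = B" using integral_heat_kernel[OF t] by simp
  finally show ?thesis using t by (simp add: heat_def)
qed

lemma heat_linear:
  assumes f: "continuous_on UNIV f" and Bf: "\<And>x. \<bar>f x\<bar> \<le> Bf"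
    and g: "continuous_on UNIV g" and Bg: "\<And>x. \<bar>g x\<bar> \<le> Bg"
  shows "heat t (\<lambda>x. a * f x + b * g x) \<theta> = a * heat t f \<theta> + b * heat t g \<theta>"
proof (cases "t \<le> 0")
  case True then show ?thesis by (simp add: heat_def)
next
  case False
  have "(\<integral>y. heat_kernel t y * (a * f (\<theta> - y) + b * g (\<theta> - y)) \<partial>lborel)
      = (\<integral>y. a * (heat_kernel t y * f (\<theta> - y)) + b * (heat_kernel t y * g (\<theta> - y)) \<partial>lborel)"
    by (simp add: algebra_simps)
  also have "\<dots> = a * (\<integral>y. heat_kernel t y * f (\<theta> - y) \<partial>lborel) + b * (\<integral>y. heat_kernel t y * g (\<theta> - y) \<partial>lborel)"
    using integrable_heat_kernel_mult[OF f Bf] integrable_heat_kernel_mult[OF g Bg] False by simp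
  finally show ?thesis using False by (simp add: heat_def)
qed

lemma heat_const: "heat t (\<lambda>x. c) \<theta> = c"
  by (cases "t \<le> 0") (auto simp: heat_def integral_heat_kernel)

lemma heat_add_const:
  assumes f: "f \<in> CS1"
  shows "heat t (\<lambda>x. f x + c) \<theta> = heat t f \<theta> + c"
proof (cases "t \<le> 0")
  case True then show ?thesis by (simp add: heat_def)
next
  case False
  then have t: "t > 0" by simp
  obtain B where B: "\<And>x. \<bar>f x\<bar> \<le> B" using CS1_bounded_abs[OF f] by blast
  have fc: "continuous_on UNIV f" using f by (simp add: CS1_def)
  have "(\<integral>y. heat_kernel t y * (f (\<theta> - y) + c) \<partial>lborel) = (\<integral>y. heat_kernel t y * f (\<theta> - y) + c * heat_kernel t y \<partial>lborel)"
    by (simp add: algebra_simps)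
  also have "\<dots> = (\<integral>y. heat_kernel t y * f (\<theta> - y) \<partial>lborel) + c"
    using integrable_heat_kernel_mult[OF fc B t] integrable_heat_kernel[OF t] integral_heat_kernel[OF t] by simp
  finally show ?thesis using t by (simp add: heat_def)
qed

lemma abs_heat_diff_le:
  assumes f: "continuous_on UNIV f" and B: "\<And>x. \<bar>f x\<bar> \<le> B"
    and eta: "\<And>y. \<bar>f (\<theta> - y) - f (\<theta>' - y)\<bar> \<le> \<eta>"
  shows "\<bar>heat t f \<theta> - heat t f \<theta>'\<bar> \<le> \<eta>"
proof (cases "t \<le> 0")
  case True then show ?thesis using eta[of 0] by (simp add: heat_def)
next
  case False
  then have t: "t > 0" by simp
  have "heat t f \<theta> - heat t f \<theta>' = (\<integral>y. heat_kernel t y * (f (\<theta> - y) - f (\<theta>' - y)) \<partial>lborel)"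
    using t integrable_heat_kernel_mult[OF f B t, of \<theta>] integrable_heat_kernel_mult[OF f B t, of \<theta>']
      by (simp add: heat_def algebra_simps)
  also have "\<bar>\<dots>\<bar> \<le> (\<integral>y. \<eta> * heat_kernel t y \<partial>lborel)"
  proof (rule integral_abs_bound_integral)
    show "integrable lborel (\<lambda>y. heat_kernel t y * (f (\<theta> - y) - f (\<theta>' - y)))"
      using integrable_heat_kernel_mult[OF f B t, of \<theta>] integrable_heat_kernel_mult[OF f B t, of \<theta>']
        by (simp add: algebra_simps)
    show "integrable lborel (\<lambda>y. \<eta> * heat_kernel t y)" using integrable_heat_kernel[OF t] by simp
    fix y
    have "heat_kernel t y * \<bar>f (\<theta> - y) - f (\<theta>' - y)\<bar> \<le> heat_kernel t y * \<eta>" using eta[of y] heat_kernel_nonneg[of t y]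
      by (rule mult_left_mono)
    then show "\<bar>heat_kernel t y * (f (\<theta> - y) - f (\<theta>' - y))\<bar> \<le> \<eta> * heat_kernel t y"
      using heat_kernel_nonneg[of t y] by (simp add: abs_mult mult.commute)
  qed
  also have "\<dots> = \<eta>" using integral_heat_kernel[OF t] by simp
  finally show ?thesis .
qed

lemma abs_heat_minus_le:
  assumes f: "continuous_on UNIV f" and B: "\<And>x. \<bar>f x\<bar> \<le> B"
    and \<delta>: "\<delta> > 0" and osc: "\<And>a b. \<bar>a - b\<bar> < \<delta> \<Longrightarrow> \<bar>f a - f b\<bar> \<le> \<eta>" and t: "t > 0"
  shows "\<bar>heat t f \<theta> - f \<theta>\<bar> \<le> \<eta> + 2 * B * (2 * \<sigma> * t) / \<delta>\<^sup>2"
proof -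
  have "heat t f \<theta> - f \<theta> = (\<integral>y. heat_kernel t y * (f (\<theta> - y) - f \<theta>) \<partial>lborel)"
    using t integrable_heat_kernel_mult[OF f B t, of \<theta>] integrable_heat_kernel[OF t] integral_heat_kernel[OF t]
    by (simp add: heat_def algebra_simps)
  also have "\<bar>\<dots>\<bar> \<le> (\<integral>y. \<eta> * heat_kernel t y + (2 * B / \<delta>\<^sup>2) * (heat_kernel t y * y\<^sup>2) \<partial>lborel)"
  proof (rule integral_abs_bound_integral)
    show "integrable lborel (\<lambda>y. heat_kernel t y * (f (\<theta> - y) - f \<theta>))"
      using integrable_heat_kernel_mult[OF f B t, of \<theta>] integrable_heat_kernel[OF t] by (simp add: algebra_simps)
    show "integrable lborel (\<lambda>y. \<eta> * heat_kernel t y + (2 * B / \<delta>\<^sup>2) * (heat_kernel t y * y\<^sup>2))"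
      using integrable_heat_kernel[OF t] integrable_heat_kernel_moment2[OF t] by simp
    fix y
    have "heat_kernel t y * \<bar>f (\<theta> - y) - f \<theta>\<bar> \<le> heat_kernel t y * (\<eta> + 2 * B / \<delta>\<^sup>2 * y\<^sup>2)"
      using abs_diff_le_modulus_quadratic[OF B \<delta> osc] heat_kernel_nonneg by (intro mult_left_mono)
    moreover have "\<bar>heat_kernel t y * (f (\<theta> - y) - f \<theta>)\<bar> = heat_kernel t y * \<bar>f (\<theta> - y) - f \<theta>\<bar>"
      using heat_kernel_nonneg[of t y] by (simp add: abs_mult)
    ultimately show "\<bar>heat_kernel t y * (f (\<theta> - y) - f \<theta>)\<bar> \<le> \<eta> * heat_kernel t y + (2 * B / \<delta>\<^sup>2) * (heat_kernel t y * y\<^sup>2)"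
      by (simp add: algebra_simps)
  qed
  also have "\<dots> = \<eta> + 2 * B * (2 * \<sigma> * t) / \<delta>\<^sup>2"
    using integrable_heat_kernel[OF t] integrable_heat_kernel_moment2[OF t] integral_heat_kernel[OF t] heat_kernel_moment2[OF t]
    by simp
  finally show ?thesis .
qed

lemma heat_CS1:
  assumes f: "f \<in> CS1"
  shows "heat t f \<in> CS1"
proof -
  have fc: "continuous_on UNIV f" using f by (simp add: CS1_def)
  obtain B where B: "\<And>x. \<bar>f x\<bar> \<le> B" using abs_le_supn[OF f] by blast
  have "continuous_on UNIV (heat t f)"
    unfolding continuous_on_iff
  proof (intro ballI allI impI)
    fix \<theta>0 e :: real assume e: "e > 0"
    obtain d where d: "d > 0" and dd: "\<And>a b. \<bar>a - b\<bar> < d \<Longrightarrow> \<bar>f a - f b\<bar> < e / 2"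
      using CS1_uniformly_continuous[OF f, of "e / 2"] e by auto
    show "\<exists>d>0. \<forall>\<theta>\<in>UNIV. dist \<theta> \<theta>0 < d \<longrightarrow> dist (heat t f \<theta>) (heat t f \<theta>0) < e"
    proof (intro exI[of _ d] conjI ballI impI)
      fix \<theta> assume "dist \<theta> \<theta>0 < d"
      then have "\<bar>heat t f \<theta> - heat t f \<theta>0\<bar> \<le> e / 2"
        by (intro abs_heat_diff_le[OF fc B]) (use dd in \<open>auto simp: dist_real_def less_imp_le\<close>)
      then show "dist (heat t f \<theta>) (heat t f \<theta>0) < e" using e by (simp add: dist_real_def)
    qed (use d in auto)
  qed
  moreover have "heat t f (\<theta> + 2 * pi) = heat t f \<theta>" for \<theta>
  proof -
    have "f (\<theta> + 2 * pi - y) = f (\<theta> - y)" for y using CS1_periodic[OF f, of "\<theta> - y"]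
      by (simp add: algebra_simps)
    then show ?thesis using CS1_periodic[OF f, of \<theta>] by (simp add: heat_def)
  qed
  ultimately show ?thesis by (simp add: CS1_def)
qed

lemma heat_tendsto_uniformly:
  assumes f: "f \<in> CS1" and e: "e > 0"
  shows "\<exists>d>0. \<forall>h. 0 < h \<and> h < d \<longrightarrow> (\<forall>\<theta>. \<bar>heat h f \<theta> - f \<theta>\<bar> \<le> e)"
proof -
  obtain B where B: "\<And>x. \<bar>f x\<bar> \<le> B" using CS1_bounded_abs[OF f] by blast
  have B0: "B \<ge> 0" using B[of 0] by simp
  have fc: "continuous_on UNIV f" using f by (simp add: CS1_def)
  obtain \<delta> where d: "\<delta> > 0" and dd: "\<And>a b. \<bar>a - b\<bar> < \<delta> \<Longrightarrow> \<bar>f a - f b\<bar> < e / 2"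
    using CS1_uniformly_continuous[OF f, of "e / 2"] e by auto
  define d where "d = e / 2 * \<delta>\<^sup>2 / (4 * \<sigma> * (B + 1))"
  have dpos: "d > 0" unfolding d_def using e d \<sigma>pos B0 by simp
  show ?thesis
  proof (intro exI[of _ d] conjI allI impI)
    show "d > 0" by (rule dpos)
    fix h \<theta> assume h: "0 < h \<and> h < d"
    have "\<bar>heat h f \<theta> - f \<theta>\<bar> \<le> e / 2 + 2 * B * (2 * \<sigma> * h) / \<delta>\<^sup>2"
      by (rule abs_heat_minus_le[OF fc B d]) (use dd h in \<open>auto simp: less_imp_le\<close>)
    also have "2 * B * (2 * \<sigma> * h) / \<delta>\<^sup>2 \<le> e / 2"
    proof -
      have "2 * B * (2 * \<sigma> * h) \<le> 2 * (B + 1) * (2 * \<sigma> * d)"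
        using h B0 \<sigma>pos by (intro mult_mono) auto
      also have "\<dots> = d * (4 * \<sigma> * (B + 1))" by (simp add: algebra_simps)
      also have "\<dots> = e / 2 * \<delta>\<^sup>2"
      proof -
        have nz: "4 * \<sigma> * (B + 1) \<noteq> 0" using B0 \<sigma>pos by simp
        show ?thesis using nonzero_eq_divide_eq[OF nz] d_def by blast
      qed
      finally show ?thesis using d by (simp add: divide_le_eq)
    qed
    finally show "\<bar>heat h f \<theta> - f \<theta>\<bar> \<le> e" by simp
  qed
qed

lemma nn_integral_heat:
  assumes f: "f \<in> CS1" and nn: "\<And>x. f x \<ge> 0" and t: "t > 0"
  shows "(\<integral>\<^sup>+y. ennreal (heat_kernel t y * f (\<theta> - y)) \<partial>lborel) = ennreal (heat t f \<theta>)"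
proof -
  obtain B where B: "\<And>x. \<bar>f x\<bar> \<le> B" using CS1_bounded_abs[OF f] by blast
  have fc: "continuous_on UNIV f" using f by (simp add: CS1_def)
  show ?thesis unfolding heat_def using t
    by (simp add: nn_integral_eq_integral[OF integrable_heat_kernel_mult[OF fc B t]] heat_kernel_nonneg nn)
qed

lemma heat_kernel_convolution:
  assumes t: "t > 0" and s: "s > 0"
  shows "(\<integral>\<^sup>+y. ennreal (heat_kernel t y) * ennreal (heat_kernel s (w - y)) \<partial>lborel) = ennreal (heat_kernel (t + s) w)"
proof -
  have "(\<lambda>x. \<integral>\<^sup>+y. ennreal (normal_density 0 (sd s) (x - y) * normal_density 0 (sd t) y) \<partial>lborel)
      = normal_density 0 (sqrt ((sd s)\<^sup>2 + (sd t)\<^sup>2))"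
    by (rule conv_normal_density_zero_mean) (use sd_pos s t in auto)
  then show ?thesis
    using sd_add[OF t s] by (simp add: heat_kernel_def fun_eq_iff ennreal_mult' mult.commute)
qed

lemma heat_semigroup_nonneg:
  assumes f: "f \<in> CS1" and nn: "\<And>x. f x \<ge> 0" and t: "t > 0" and s: "s > 0"
  shows "heat t (heat s f) \<theta> = heat (t + s) f \<theta>"
proof -
  have fm[measurable]: "f \<in> borel_measurable borel" by (rule CS1_borel_measurable[OF f])
  have hnn: "heat s f x \<ge> 0" for x
    using s by (simp add: heat_def integral_nonneg_AE heat_kernel_nonneg nn)
  have inner: "ennreal (heat s f (\<theta> - y))
      = (\<integral>\<^sup>+w. ennreal (heat_kernel s (w - y)) * ennreal (f (\<theta> - w)) \<partial>lborel)" for y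
  proof -
    have m: "(\<lambda>z. ennreal (heat_kernel s z * f (\<theta> - y - z))) \<in> borel_measurable borel" by measurable
    have "ennreal (heat s f (\<theta> - y)) = (\<integral>\<^sup>+z. ennreal (heat_kernel s z * f (\<theta> - y - z)) \<partial>lborel)"
      by (rule nn_integral_heat[OF f nn s, symmetric])
    also have "\<dots> = (\<integral>\<^sup>+w. ennreal (heat_kernel s (- y + 1 * w) * f (\<theta> - y - (- y + 1 * w))) \<partial>lborel)"
      using nn_integral_real_affine[OF m, of 1 "- y"] by simp
    also have "\<dots> = (\<integral>\<^sup>+w. ennreal (heat_kernel s (w - y)) * ennreal (f (\<theta> - w)) \<partial>lborel)"
      by (rule nn_integral_cong) (simp add: ennreal_mult' heat_kernel_nonneg)
    finally show ?thesis .
  qed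
  have "ennreal (heat t (heat s f) \<theta>) = (\<integral>\<^sup>+y. ennreal (heat_kernel t y) * ennreal (heat s f (\<theta> - y)) \<partial>lborel)"
    using nn_integral_heat[OF heat_CS1[OF f] hnn t, symmetric] by (simp add: ennreal_mult' heat_kernel_nonneg)
  also have "\<dots> = (\<integral>\<^sup>+y. \<integral>\<^sup>+w. ennreal (heat_kernel t y) * ennreal (heat_kernel s (w - y)) * ennreal (f (\<theta> - w))
      \<partial>lborel \<partial>lborel)"
    unfolding inner by (subst nn_integral_cmult[symmetric]) (auto simp: mult.assoc)
  also have "\<dots> = (\<integral>\<^sup>+w. \<integral>\<^sup>+y. ennreal (heat_kernel t y) * ennreal (heat_kernel s (w - y)) * ennreal (f (\<theta> - w))
      \<partial>lborel \<partial>lborel)"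
    by (rule lborel_pair.Fubini') measurable
  also have "\<dots> = (\<integral>\<^sup>+w. ennreal (heat_kernel (t + s) w * f (\<theta> - w)) \<partial>lborel)"
    using heat_kernel_convolution[OF t s]
    by (subst nn_integral_multc) (auto simp: ennreal_mult' heat_kernel_nonneg nn)
  also have "\<dots> = ennreal (heat (t + s) f \<theta>)"
    by (rule nn_integral_heat[OF f nn]) (use t s in simp)
  finally show ?thesis
    using t s by (simp add: heat_def integral_nonneg_AE heat_kernel_nonneg hnn nn)
qed

lemma heat_semigroup:
  assumes f: "f \<in> CS1" and t: "t \<ge> 0" and s: "s \<ge> 0"
  shows "heat t (heat s f) \<theta> = heat (t + s) f \<theta>"
proof (cases "t = 0 \<or> s = 0")
  case True
  then show ?thesis
  proof
    assume "t = 0" then show ?thesis by (simp add: heat_def)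
  next
    assume s0: "s = 0"
    have "heat s f = f" using s0 by (simp add: heat_def[abs_def])
    then show ?thesis using s0 by simp
  qed
next
  case False
  then have t': "t > 0" and s': "s > 0" using t s by auto
  obtain B where B: "\<And>x. \<bar>f x\<bar> \<le> B" using CS1_bounded_abs[OF f] by blast
  define g where "g = (\<lambda>x. f x + B)"
  have g: "g \<in> CS1" unfolding g_def using f by (auto simp: CS1_def intro!: continuous_intros)
  have gnn: "g x \<ge> 0" for x unfolding g_def using B[of x] by linarith
  have fg: "f = (\<lambda>x. g x + (- B))" unfolding g_def by simp
  have hs: "heat s f = (\<lambda>x. heat s g x + (- B))" unfolding fg by (rule ext) (rule heat_add_const[OF g])
  have "heat t (heat s f) \<theta> = heat t (heat s g) \<theta> + (- B)"
    unfolding hs by (rule heat_add_const[OF heat_CS1[OF g]])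
  also have "heat t (heat s g) \<theta> = heat (t + s) g \<theta>" by (rule heat_semigroup_nonneg[OF g gnn t' s'])
  also have "heat (t + s) g \<theta> + (- B) = heat (t + s) f \<theta>"
    unfolding fg by (rule heat_add_const[OF g, symmetric])
  finally show ?thesis .
qed

lemma heat_fixed_imp_const:
  assumes v: "v \<in> CS1" and t: "t > 0" and hfix: "\<And>\<theta>. heat t v \<theta> = v \<theta>"
  shows "\<exists>c. \<forall>\<theta>. v \<theta> = c"
proof -
  have vc: "continuous_on UNIV v" using v by (simp add: CS1_def)
  obtain B where B: "\<And>x. \<bar>v x\<bar> \<le> B" using CS1_bounded_abs[OF v] by blast
  obtain \<theta>0 where t0: "\<theta>0 \<in> {0..2*pi}" and mx: "\<And>\<theta>. \<theta> \<in> {0..2*pi} \<Longrightarrow> v \<theta> \<le> v \<theta>0"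
    using continuous_attains_sup[of "{0..2*pi}" v] vc continuous_on_subset
      by (metis atLeastAtMost_iff compact_Icc empty_iff order.refl pi_ge_zero zero_le_mult_iff zero_le_numeral subset_UNIV)
  have mx': "v \<theta> \<le> v \<theta>0" for \<theta>
    using mx[of "wrap \<theta>"] wrap_in_period[of \<theta>] CS1_wrap[OF v, of \<theta>] by auto
  define \<phi> where "\<phi> = (\<lambda>y. heat_kernel t y * (v \<theta>0 - v (\<theta>0 - y)))"
  have \<phi>nn: "\<phi> y \<ge> 0" for y unfolding \<phi>_def using mx' heat_kernel_nonneg by simp
  have \<phi>c: "continuous_on UNIV \<phi>" unfolding \<phi>_def using continuous_on_heat_kernel[OF t] vc
    by (auto intro!: continuous_intros continuous_on_compose2[OF vc])
  have \<phi>i: "integrable lborel \<phi>"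
    unfolding \<phi>_def using integrable_heat_kernel_mult[OF vc B t, of \<theta>0] integrable_heat_kernel[OF t]
      by (simp add: algebra_simps)
  have "(\<integral>y. \<phi> y \<partial>lborel) = v \<theta>0 - heat t v \<theta>0"
    unfolding \<phi>_def
      using integrable_heat_kernel_mult[OF vc B t, of \<theta>0] integrable_heat_kernel[OF t] integral_heat_kernel[OF t] t
    by (simp add: algebra_simps heat_def)
  also have "\<dots> = 0" using hfix by simp
  finally have i0: "(\<integral>y. \<phi> y \<partial>lborel) = 0" .
  have vv: "v (\<theta>0 - y) = v \<theta>0" for y
  proof (rule ccontr)
    assume "v (\<theta>0 - y) \<noteq> v \<theta>0"
    then have "v (\<theta>0 - y) < v \<theta>0" using mx'[of "\<theta>0 - y"] by simp
    then have "\<phi> y > 0" unfolding \<phi>_def using heat_kernel_pos[OF t] by simp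
    then have "(\<integral>y. \<phi> y \<partial>lborel) > 0"
      by (rule integral_pos_continuous[OF \<phi>c \<phi>nn \<phi>i])
    then show False using i0 by simp
  qed
  then have "v \<theta> = v \<theta>0" for \<theta> using vv[of "\<theta>0 - \<theta>"] by simp
  then show ?thesis by blast
qed

lemma heat_minus_Taylor_eq:
  assumes f: "f \<in> C2S1" and h: "h > 0"
  shows "heat h f \<theta> - f \<theta> - \<sigma> * h * deriv (deriv f) \<theta>
    = (\<integral>y. heat_kernel h y * (f (\<theta> - y) - f \<theta> + y * deriv f \<theta> - y\<^sup>2 / 2 * deriv (deriv f) \<theta>) \<partial>lborel)"
proof -
  have fc: "continuous_on UNIV f" using C2S1_CS1[OF f] by (simp add: CS1_def)
  obtain B where B: "\<And>x. \<bar>f x\<bar> \<le> B" using CS1_bounded_abs[OF C2S1_CS1[OF f]] by blast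
  have "(\<integral>y. heat_kernel h y * (f (\<theta> - y) - f \<theta> + y * deriv f \<theta> - y\<^sup>2 / 2 * deriv (deriv f) \<theta>) \<partial>lborel)
      = (\<integral>y. heat_kernel h y * f (\<theta> - y) - f \<theta> * heat_kernel h y + deriv f \<theta> * (heat_kernel h y * y)
           - deriv (deriv f) \<theta> / 2 * (heat_kernel h y * y\<^sup>2) \<partial>lborel)"
    by (rule Bochner_Integration.integral_cong) (simp_all add: algebra_simps)
  also have "\<dots> = (\<integral>y. heat_kernel h y * f (\<theta> - y) \<partial>lborel) - f \<theta> - deriv (deriv f) \<theta> / 2 * (2 * \<sigma> * h)"
    using integrable_heat_kernel_mult[OF fc B h, of \<theta>] integrable_heat_kernel[OF h] integrable_heat_kernel_moment1[OF h]
      integrable_heat_kernel_moment2[OF h] integral_heat_kernel[OF h] heat_kernel_moment1[OF h] heat_kernel_moment2[OF h]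
    by simp
  finally show ?thesis using h by (simp add: heat_def)
qed

lemma abs_heat_minus_Taylor_le:
  assumes f: "f \<in> C2S1" and h: "h > 0" and M2: "\<And>x. \<bar>deriv (deriv f) x\<bar> \<le> M2" and \<delta>: "\<delta> > 0"
    and osc: "\<And>a b. \<bar>a - b\<bar> < \<delta> \<Longrightarrow> \<bar>deriv (deriv f) a - deriv (deriv f) b\<bar> \<le> \<epsilon>"
  shows "\<bar>heat h f \<theta> - f \<theta> - \<sigma> * h * deriv (deriv f) \<theta>\<bar> \<le> \<epsilon> * \<sigma> * h + M2 / \<delta> * (2 * sd h ^ 3)"
proof -
  define R where "R y = f (\<theta> - y) - f \<theta> + y * deriv f \<theta> - y\<^sup>2 / 2 * deriv (deriv f) \<theta>" for y
  have fc: "continuous_on UNIV f" using C2S1_CS1[OF f] by (simp add: CS1_def)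
  obtain B where B: "\<And>x. \<bar>f x\<bar> \<le> B" using CS1_bounded_abs[OF C2S1_CS1[OF f]] by blast
  have M20: "M2 \<ge> 0" using M2[of 0] by simp
  have "integrable lborel (\<lambda>y. heat_kernel h y * f (\<theta> - y) - f \<theta> * heat_kernel h y + deriv f \<theta> * (heat_kernel h y * y)
      - deriv (deriv f) \<theta> / 2 * (heat_kernel h y * y\<^sup>2))"
    using integrable_heat_kernel_mult[OF fc B h, of \<theta>] integrable_heat_kernel[OF h] integrable_heat_kernel_moment1[OF h]
      integrable_heat_kernel_moment2[OF h] by simp
  then have iR: "integrable lborel (\<lambda>y. heat_kernel h y * R y)"
    by (rule Bochner_Integration.integrable_cong[THEN iffD1, rotated 2]) (simp_all add: R_def algebra_simps)
  have "\<bar>\<integral>y. heat_kernel h y * R y \<partial>lborel\<bar>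
      \<le> (\<integral>y. \<epsilon> / 2 * (heat_kernel h y * y\<^sup>2) + M2 / \<delta> * (heat_kernel h y * \<bar>y\<bar> ^ 3) \<partial>lborel)"
  proof (rule integral_abs_bound_integral[OF iR])
    show "integrable lborel (\<lambda>y. \<epsilon> / 2 * (heat_kernel h y * y\<^sup>2) + M2 / \<delta> * (heat_kernel h y * \<bar>y\<bar> ^ 3))"
      using integrable_heat_kernel_moment2[OF h] integrable_heat_kernel_abs_moment3[OF h] by simp
    fix y
    have "heat_kernel h y * \<bar>R y\<bar> \<le> heat_kernel h y * (\<epsilon> / 2 * y\<^sup>2 + M2 / \<delta> * \<bar>y\<bar> ^ 3)"
      unfolding R_def using C2S1_Taylor2_remainder_le[OF f M2 \<delta> osc] heat_kernel_nonneg by (intro mult_left_mono)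
    then show "\<bar>heat_kernel h y * R y\<bar> \<le> \<epsilon> / 2 * (heat_kernel h y * y\<^sup>2) + M2 / \<delta> * (heat_kernel h y * \<bar>y\<bar> ^ 3)"
      using heat_kernel_nonneg[of h y] by (simp add: abs_mult algebra_simps)
  qed
  also have "\<dots> = \<epsilon> / 2 * (2 * \<sigma> * h) + M2 / \<delta> * (\<integral>y. heat_kernel h y * \<bar>y\<bar> ^ 3 \<partial>lborel)"
    using integrable_heat_kernel_moment2[OF h] integrable_heat_kernel_abs_moment3[OF h] heat_kernel_moment2[OF h]
      by simp
  also have "\<dots> \<le> \<epsilon> / 2 * (2 * \<sigma> * h) + M2 / \<delta> * (2 * sd h ^ 3)"
    using heat_kernel_abs_moment3_le[OF h] M20 \<delta> by (intro add_left_mono mult_left_mono) auto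
  finally show ?thesis unfolding heat_minus_Taylor_eq[OF f h] R_def by simp
qed

lemma abs_heat_quotient_minus_le:
  assumes f: "f \<in> C2S1" and h: "h > 0" and M2: "\<And>x. \<bar>deriv (deriv f) x\<bar> \<le> M2" and \<delta>: "\<delta> > 0"
    and osc: "\<And>a b. \<bar>a - b\<bar> < \<delta> \<Longrightarrow> \<bar>deriv (deriv f) a - deriv (deriv f) b\<bar> \<le> \<epsilon>"
  shows "\<bar>(heat h f \<theta> - f \<theta>) / h - \<sigma> * deriv (deriv f) \<theta>\<bar> \<le> \<epsilon> * \<sigma> + M2 / \<delta> * 4 * \<sigma> * sd h"
proof -
  have "\<bar>(heat h f \<theta> - f \<theta>) / h - \<sigma> * deriv (deriv f) \<theta>\<bar>
      = \<bar>heat h f \<theta> - f \<theta> - \<sigma> * h * deriv (deriv f) \<theta>\<bar> / h"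
    using h by (simp add: field_simps)
  also have "\<dots> \<le> (\<epsilon> * \<sigma> * h + M2 / \<delta> * (2 * sd h ^ 3)) / h"
    using abs_heat_minus_Taylor_le[OF f h M2 \<delta> osc] h by (intro divide_right_mono) auto
  also have "\<dots> = \<epsilon> * \<sigma> + M2 / \<delta> * 4 * \<sigma> * sd h"
  proof -
    have "sd h ^ 3 = sd h * (2 * \<sigma> * h)" using sd_sq[OF h] by (simp add: power3_eq_cube power2_eq_square)
    then show ?thesis using h by (simp add: field_simps)
  qed
  finally show ?thesis .
qed

lemma heat_quotient_uniform:
  assumes f: "f \<in> C2S1" and e: "e > 0"
  shows "\<exists>d>0. \<forall>h. 0 < h \<and> h < d \<longrightarrow> (\<forall>\<theta>. \<bar>(heat h f \<theta> - f \<theta>) / h - \<sigma> * deriv (deriv f) \<theta>\<bar> \<le> e)"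
proof -
  define f2 where "f2 = deriv (deriv f)"
  have f2C: "f2 \<in> CS1" using C2S1_deriv2_CS1[OF f, of 1] by (simp add: f2_def)
  obtain M2 where M2: "\<And>x. \<bar>f2 x\<bar> \<le> M2" using CS1_bounded_abs[OF f2C] by blast
  have M20: "M2 \<ge> 0" using M2[of 0] by simp
  define \<epsilon> where "\<epsilon> = e / (2 * \<sigma>)"
  have \<epsilon>: "\<epsilon> > 0" unfolding \<epsilon>_def using e \<sigma>pos by simp
  obtain \<delta> where \<delta>: "\<delta> > 0" and osc: "\<And>a b. \<bar>a - b\<bar> < \<delta> \<Longrightarrow> \<bar>f2 a - f2 b\<bar> < \<epsilon>"
    using CS1_uniformly_continuous[OF f2C \<epsilon>] by blast
  define q where "q = e * \<delta> / (8 * \<sigma> * (M2 + 1))"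
  have q: "q > 0" unfolding q_def using e \<delta> \<sigma>pos M20 by simp
  have small: "M2 / \<delta> * 4 * \<sigma> * q \<le> e / 2"
  proof -
    have "M2 / \<delta> * 4 * \<sigma> * q = M2 * (4 * \<sigma> * q / \<delta>)" by simp
    also have "\<dots> \<le> (M2 + 1) * (4 * \<sigma> * q / \<delta>)" using \<sigma>pos q \<delta>
      by (intro mult_right_mono) auto
    also have "\<dots> = (q * (8 * \<sigma> * (M2 + 1))) / (2 * \<delta>)" using \<delta> by (simp add: field_simps)
    also have "q * (8 * \<sigma> * (M2 + 1)) = e * \<delta>"
      unfolding q_def using \<sigma>pos M20 by (simp add: nonzero_eq_divide_eq add_nonneg_pos)
    also have "e * \<delta> / (2 * \<delta>) = e / 2" using \<delta> by simp
    finally show ?thesis .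
  qed
  have "\<bar>(heat h f \<theta> - f \<theta>) / h - \<sigma> * f2 \<theta>\<bar> \<le> e" if h: "0 < h" "h < q\<^sup>2 / (2 * \<sigma>)" for h \<theta>
  proof -
    have "2 * \<sigma> * h \<le> q\<^sup>2" using h \<sigma>pos by (simp add: field_simps)
    then have "sd h \<le> sqrt (q\<^sup>2)" unfolding sd_def by (rule real_sqrt_le_mono)
    then have sdh: "sd h \<le> q" using q by simp
    have "\<bar>(heat h f \<theta> - f \<theta>) / h - \<sigma> * f2 \<theta>\<bar> \<le> \<epsilon> * \<sigma> + M2 / \<delta> * 4 * \<sigma> * sd h"
      using abs_heat_quotient_minus_le[OF f h(1), of M2 \<delta> \<epsilon> \<theta>] M2 \<delta> osc
        by (auto simp: f2_def less_imp_le)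
    also have "\<epsilon> * \<sigma> = e / 2" unfolding \<epsilon>_def using \<sigma>pos by simp
    also have "M2 / \<delta> * 4 * \<sigma> * sd h \<le> M2 / \<delta> * 4 * \<sigma> * q"
      using sdh M20 \<delta> \<sigma>pos by (intro mult_left_mono) auto
    finally show ?thesis using small by simp
  qed
  then show ?thesis using q \<sigma>pos by (intro exI[of _ "q\<^sup>2 / (2 * \<sigma>)"]) (auto simp: f2_def)
qed

(* Equicontinuity of the heat semigroup rests on the L1-continuity of translations of the Gaussian. *)

definition shift_L1 :: "real \<Rightarrow> real \<Rightarrow> real" where
  "shift_L1 t d = (\<integral>u. \<bar>heat_kernel t (u + d) - heat_kernel t u\<bar> \<partial>lborel)"

lemma heat_kernel_shift_le:
  assumes t: "t > 0" and d: "\<bar>d\<bar> \<le> 1"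
  shows "heat_kernel t (u + d) \<le> sqrt 2 * exp (1 / (2 * (sd t)\<^sup>2)) * heat_kernel (2 * t) u"
proof -
  define s where "s = sd t"
  have s: "s > 0" unfolding s_def using sd_pos[OF t] .
  have s2: "sd (2 * t) = sqrt 2 * s" unfolding s_def sd_def by (simp add: real_sqrt_mult[symmetric] algebra_simps)
  have sq: "(u + d)\<^sup>2 \<ge> u\<^sup>2 / 2 - 1"
  proof -
    have "2 * (u + d)\<^sup>2 + 2 * d\<^sup>2 - u\<^sup>2 = (u + 2 * d)\<^sup>2"
      by (simp add: power2_eq_square algebra_simps)
    moreover have "(u + 2 * d)\<^sup>2 \<ge> 0" by simp
    ultimately have "u\<^sup>2 \<le> 2 * (u + d)\<^sup>2 + 2 * d\<^sup>2" by linarith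
    moreover have "d\<^sup>2 \<le> 1" using d by (simp add: abs_square_le_1)
    ultimately show ?thesis by simp
  qed
  have ex: "exp (- (u + d)\<^sup>2 / (2 * s\<^sup>2)) \<le> exp (1 / (2 * s\<^sup>2)) * exp (- u\<^sup>2 / (2 * (sqrt 2 * s)\<^sup>2))"
  proof -
    have "- (u + d)\<^sup>2 / (2 * s\<^sup>2) \<le> 1 / (2 * s\<^sup>2) + (- u\<^sup>2 / (4 * s\<^sup>2))"
      using sq s by (simp add: field_simps)
    then have "exp (- (u + d)\<^sup>2 / (2 * s\<^sup>2)) \<le> exp (1 / (2 * s\<^sup>2) + (- u\<^sup>2 / (4 * s\<^sup>2)))"
      by simp
    also have "\<dots> = exp (1 / (2 * s\<^sup>2)) * exp (- u\<^sup>2 / (2 * (sqrt 2 * s)\<^sup>2))"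
      by (simp add: exp_add[symmetric] power_mult_distrib)
    finally show ?thesis .
  qed
  have c: "1 / sqrt (2 * pi * s\<^sup>2) = sqrt 2 * (1 / sqrt (2 * pi * (sqrt 2 * s)\<^sup>2))"
    using s by (simp add: power_mult_distrib real_sqrt_mult field_simps)
  have "heat_kernel t (u + d) = 1 / sqrt (2 * pi * s\<^sup>2) * exp (- (u + d)\<^sup>2 / (2 * s\<^sup>2))"
    by (simp add: heat_kernel_def s_def normal_density_def)
  also have "\<dots> \<le> 1 / sqrt (2 * pi * s\<^sup>2) * (exp (1 / (2 * s\<^sup>2)) * exp (- u\<^sup>2 / (2 * (sqrt 2 * s)\<^sup>2)))"
    using ex by (intro mult_left_mono) auto
  also have "\<dots> = sqrt 2 * exp (1 / (2 * s\<^sup>2)) * (1 / sqrt (2 * pi * (sqrt 2 * s)\<^sup>2) * exp (- u\<^sup>2 / (2 * (sqrt 2 * s)\<^sup>2)))"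
    unfolding c by (simp add: mult_ac)
  also have "\<dots> = sqrt 2 * exp (1 / (2 * (sd t)\<^sup>2)) * heat_kernel (2 * t) u"
    by (simp add: heat_kernel_def s2 normal_density_def s_def)
  finally show ?thesis .
qed

lemma integrable_heat_kernel_shift_diff:
  assumes t: "t > 0" shows "integrable lborel (\<lambda>u. \<bar>heat_kernel t (u + d) - heat_kernel t u\<bar>)"
proof -
  have "integrable lborel (\<lambda>u. heat_kernel t (d + 1 * u))"
    using lborel_integrable_real_affine[OF integrable_heat_kernel[OF t], of 1 d] by simp
  then have "integrable lborel (\<lambda>u. heat_kernel t (u + d))" by (simp add: add.commute)
  then show ?thesis using integrable_heat_kernel[OF t] by (intro integrable_abs integrable_diff) auto
qed

lemma shift_L1_tendsto_0:
  assumes t: "t > 0" and X0: "X \<longlonglongrightarrow> 0" and X1: "\<And>n. \<bar>X n\<bar> \<le> 1"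
  shows "(\<lambda>n. shift_L1 t (X n)) \<longlonglongrightarrow> 0"
proof -
  define A where "A = sqrt 2 * exp (1 / (2 * (sd t)\<^sup>2))"
  define w where "w = (\<lambda>u. A * heat_kernel (2 * t) u + heat_kernel t u)"
  have t2: "2 * t > 0" using t by simp
  have "(\<lambda>n. \<integral>u. \<bar>heat_kernel t (u + X n) - heat_kernel t u\<bar> \<partial>lborel) \<longlonglongrightarrow> integral\<^sup>L lborel (\<lambda>u::real. 0::real)"
  proof (rule Bochner_Integration.integral_dominated_convergence[where w=w])
    show "(\<lambda>u::real. 0::real) \<in> borel_measurable lborel" by simp
    show "(\<lambda>u. \<bar>heat_kernel t (u + X n) - heat_kernel t u\<bar>) \<in> borel_measurable lborel" for n
      by measurable
    show "integrable lborel w" unfolding w_def using integrable_heat_kernel[OF t] integrable_heat_kernel[OF t2] by simp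
    show "AE u in lborel. (\<lambda>n. \<bar>heat_kernel t (u + X n) - heat_kernel t u\<bar>) \<longlonglongrightarrow> 0"
    proof (rule AE_I2)
      fix u
      have "isCont (heat_kernel t) u" using continuous_on_heat_kernel[OF t] continuous_on_eq_continuous_at by blast
      moreover have "(\<lambda>n. u + X n) \<longlonglongrightarrow> u" using tendsto_add[OF tendsto_const X0] by simp
      ultimately have "(\<lambda>n. heat_kernel t (u + X n)) \<longlonglongrightarrow> heat_kernel t u"
        by (rule isCont_tendsto_compose)
      then have "(\<lambda>n. heat_kernel t (u + X n) - heat_kernel t u) \<longlonglongrightarrow> 0" by (rule LIM_zero)
      then show "(\<lambda>n. \<bar>heat_kernel t (u + X n) - heat_kernel t u\<bar>) \<longlonglongrightarrow> 0"
        by (rule tendsto_rabs_zero)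
    qed
    fix n
    show "AE u in lborel. norm (\<bar>heat_kernel t (u + X n) - heat_kernel t u\<bar>) \<le> w u"
    proof (rule AE_I2)
      fix u
      have "norm (\<bar>heat_kernel t (u + X n) - heat_kernel t u\<bar>) \<le> heat_kernel t (u + X n) + heat_kernel t u"
        using heat_kernel_nonneg[of t "u + X n"] heat_kernel_nonneg[of t u] by (simp add: abs_le_iff)
      also have "\<dots> \<le> w u" unfolding w_def A_def using heat_kernel_shift_le[OF t X1[of n], of u] by simp
      finally show "norm (\<bar>heat_kernel t (u + X n) - heat_kernel t u\<bar>) \<le> w u" .
    qed
  qed
  then show ?thesis by (simp add: shift_L1_def)
qed

lemma shift_L1_small:
  assumes t: "t > 0" and e: "e > 0"
  shows "\<exists>\<delta>>0. \<forall>d. \<bar>d\<bar> < \<delta> \<longrightarrow> shift_L1 t d \<le> e"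
proof (rule ccontr)
  assume "\<not> ?thesis"
  then have "\<forall>n::nat. \<exists>d. \<bar>d\<bar> < 1 / Suc n \<and> shift_L1 t d > e" by (auto simp: not_le)
  then obtain X where X: "\<And>n. \<bar>X n\<bar> < 1 / Suc n" and XL: "\<And>n. shift_L1 t (X n) > e" by metis
  have X1: "\<bar>X n\<bar> \<le> 1" for n
    using X[of n] by (smt (verit) of_nat_0_le_iff divide_le_eq_1 of_nat_Suc)
  have X0: "X \<longlonglongrightarrow> 0"
  proof (rule Lim_null_comparison[OF _ LIMSEQ_inverse_real_of_nat])
    show "\<forall>\<^sub>F n in sequentially. norm (X n) \<le> inverse (real (Suc n))"
      using X by (auto intro!: always_eventually less_imp_le simp: divide_inverse)
  qed
  have "\<forall>\<^sub>F n in sequentially. shift_L1 t (X n) < e"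
    using order_tendstoD(2)[OF shift_L1_tendsto_0[OF t X0 X1] e] .
  then obtain n where "shift_L1 t (X n) < e" by (auto simp: eventually_sequentially)
  then show False using XL[of n] by simp
qed

lemma abs_heat_diff_le_shift_L1:
  assumes t: "t > 0" and f: "f \<in> CS1" and f1: "\<And>x. \<bar>f x\<bar> \<le> B"
  shows "\<bar>heat t f \<theta> - heat t f \<theta>'\<bar> \<le> B * shift_L1 t (\<theta> - \<theta>')"
proof -
  have fc: "continuous_on UNIV f" using f by (simp add: CS1_def)
  have sub: "(\<integral>y. heat_kernel t y * f (a - y) \<partial>lborel) = (\<integral>p. heat_kernel t (a - p) * f p \<partial>lborel)" for a
    using lborel_integral_real_affine[of "-1" "\<lambda>y. heat_kernel t y * f (a - y)" a] by simp
  have ia: "integrable lborel (\<lambda>p. heat_kernel t (a - p) * f p)" for a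
  proof -
    have "integrable lborel (\<lambda>y. heat_kernel t y * f (a - y))" by (rule integrable_heat_kernel_mult[OF fc f1 t])
    then have "integrable lborel (\<lambda>p. heat_kernel t (a + (-1) * p) * f (a - (a + (-1) * p)))"
      by (rule lborel_integrable_real_affine) simp
    then show ?thesis by simp
  qed
  have "heat t f \<theta> - heat t f \<theta>' = (\<integral>p. (heat_kernel t (\<theta> - p) - heat_kernel t (\<theta>' - p)) * f p \<partial>lborel)"
    using t ia[of \<theta>] ia[of \<theta>'] by (simp add: heat_def sub algebra_simps)
  also have "\<bar>\<dots>\<bar> \<le> (\<integral>p. B * \<bar>heat_kernel t (\<theta> - p) - heat_kernel t (\<theta>' - p)\<bar> \<partial>lborel)"
  proof (rule integral_abs_bound_integral)
    show "integrable lborel (\<lambda>p. (heat_kernel t (\<theta> - p) - heat_kernel t (\<theta>' - p)) * f p)"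
      using ia[of \<theta>] ia[of \<theta>'] by (simp add: algebra_simps)
    have "integrable lborel (\<lambda>u. \<bar>heat_kernel t (u + (\<theta> - \<theta>')) - heat_kernel t u\<bar>)"
      by (rule integrable_heat_kernel_shift_diff[OF t])
    then have "integrable lborel (\<lambda>p. \<bar>heat_kernel t ((\<theta>' + (-1) * p) + (\<theta> - \<theta>')) - heat_kernel t (\<theta>' + (-1) * p)\<bar>)"
      by (rule lborel_integrable_real_affine) simp
    then show "integrable lborel (\<lambda>p. B * \<bar>heat_kernel t (\<theta> - p) - heat_kernel t (\<theta>' - p)\<bar>)"
      by simp
    fix p
    have "\<bar>(heat_kernel t (\<theta> - p) - heat_kernel t (\<theta>' - p)) * f p\<bar> = \<bar>heat_kernel t (\<theta> - p) - heat_kernel t (\<theta>' - p)\<bar> * \<bar>f p\<bar>"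
      by (simp add: abs_mult)
    also have "\<dots> \<le> \<bar>heat_kernel t (\<theta> - p) - heat_kernel t (\<theta>' - p)\<bar> * B" using f1[of p]
      by (intro mult_left_mono) auto
    finally show "\<bar>(heat_kernel t (\<theta> - p) - heat_kernel t (\<theta>' - p)) * f p\<bar> \<le> B * \<bar>heat_kernel t (\<theta> - p) - heat_kernel t (\<theta>' - p)\<bar>"
      by (simp add: mult.commute)
  qed
  also have "(\<integral>p. B * \<bar>heat_kernel t (\<theta> - p) - heat_kernel t (\<theta>' - p)\<bar> \<partial>lborel) = B * (\<integral>p. \<bar>heat_kernel t (\<theta> - p) - heat_kernel t (\<theta>' - p)\<bar> \<partial>lborel)"
    by simp
  also have "(\<integral>p. \<bar>heat_kernel t (\<theta> - p) - heat_kernel t (\<theta>' - p)\<bar> \<partial>lborel) = shift_L1 t (\<theta> - \<theta>')"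
    unfolding shift_L1_def using lborel_integral_real_affine[of "-1" "\<lambda>p. \<bar>heat_kernel t (\<theta> - p) - heat_kernel t (\<theta>' - p)\<bar>" \<theta>']
      by (simp add: algebra_simps)
  finally show ?thesis .
qed

definition Heat :: "real \<Rightarrow> cper \<Rightarrow> cper" where
  "Heat t x = Cper (heat t (apply_cper x))"

lemma apply_Heat: "apply_cper (Heat t x) = heat t (apply_cper x)"
  unfolding Heat_def by (rule apply_cper_Cper[OF heat_CS1[OF apply_cper_CS1]])

lemma Heat_add: "Heat t (x + y) = Heat t x + Heat t y"
proof (rule cper_eqI)
  fix \<theta>
  have "heat t (\<lambda>s. 1 * apply_cper x s + 1 * apply_cper y s) \<theta> = 1 * heat t (apply_cper x) \<theta> + 1 * heat t (apply_cper y) \<theta>"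
    by (rule heat_linear[OF continuous_on_apply_cper abs_apply_cper_le_norm continuous_on_apply_cper abs_apply_cper_le_norm])
  then show "apply_cper (Heat t (x + y)) \<theta> = apply_cper (Heat t x + Heat t y) \<theta>"
    by (simp add: apply_Heat apply_cper_add_fun)
qed

lemma Heat_scale: "Heat t (c *\<^sub>R x) = c *\<^sub>R Heat t x"
proof (rule cper_eqI)
  fix \<theta>
  have "heat t (\<lambda>s. c * apply_cper x s + 0 * apply_cper x s) \<theta> = c * heat t (apply_cper x) \<theta> + 0 * heat t (apply_cper x) \<theta>"
    by (rule heat_linear[OF continuous_on_apply_cper abs_apply_cper_le_norm continuous_on_apply_cper abs_apply_cper_le_norm])
  then show "apply_cper (Heat t (c *\<^sub>R x)) \<theta> = apply_cper (c *\<^sub>R Heat t x) \<theta>"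
    by (simp add: apply_Heat apply_cper_scaleR_fun)
qed

lemma norm_Heat_le: "norm (Heat t x) \<le> norm x"
  by (rule norm_cper_bound) (simp add: apply_Heat abs_heat_le[OF continuous_on_apply_cper abs_apply_cper_le_norm])

lemma bounded_linear_Heat: "bounded_linear (Heat t)"
  by (rule bounded_linear_intro[where K=1]) (auto simp: Heat_add Heat_scale norm_Heat_le)

lemma Heat_diff: "Heat t (x - y) = Heat t x - Heat t y"
  using bounded_linear_Heat[of t] by (simp add: bounded_linear.linear linear_diff)

lemma Heat_0: "Heat 0 x = x"
  by (rule cper_eqI) (simp add: apply_Heat heat_def)

lemma Heat_semigroup: "t \<ge> 0 \<Longrightarrow> s \<ge> 0 \<Longrightarrow> Heat (t + s) x = Heat t (Heat s x)"
  by (rule cper_eqI) (simp add: apply_Heat heat_semigroup[OF apply_cper_CS1])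

lemma Heat_tendsto_0: "((\<lambda>t. Heat t x) \<longlongrightarrow> x) (at_right 0)"
proof (rule tendstoI)
  fix e :: real assume e: "e > 0"
  obtain d where d: "d > 0" and dd: "\<And>h. 0 < h \<and> h < d \<Longrightarrow> (\<forall>\<theta>. \<bar>heat h (apply_cper x) \<theta> - apply_cper x \<theta>\<bar> \<le> e / 2)"
    using heat_tendsto_uniformly[OF apply_cper_CS1, of "e / 2" x] e by auto
  show "\<forall>\<^sub>F t in at_right 0. dist (Heat t x) x < e"
    unfolding eventually_at_right_field
  proof (intro exI[of _ d] conjI allI impI)
    show "0 < d" by (rule d)
    fix h :: real assume h: "0 < h" "h < d"
    have "norm (Heat h x - x) \<le> e / 2"
      by (rule norm_cper_bound) (use dd h in \<open>simp add: apply_Heat\<close>)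
    then show "dist (Heat h x) x < e" using e by (simp add: dist_norm)
  qed
qed

lemma contraction_semigroup_Heat: "contraction_semigroup Heat"
  unfolding contraction_semigroup_def using bounded_linear_Heat norm_Heat_le Heat_0 Heat_semigroup Heat_tendsto_0
    by blast

lemma Heat_quotient_tendsto:
  assumes f: "f \<in> C2S1"
  shows "((\<lambda>h. (Heat h (Cper f) - Cper f) /\<^sub>R h) \<longlongrightarrow> Cper (\<lambda>\<theta>. \<sigma> * deriv (deriv f) \<theta>)) (at_right 0)"
proof (rule tendstoI)
  fix e :: real assume e: "e > 0"
  obtain d where d: "d > 0" and dd: "\<And>h. 0 < h \<and> h < d \<Longrightarrow> (\<forall>\<theta>. \<bar>(heat h f \<theta> - f \<theta>) / h - \<sigma> * deriv (deriv f) \<theta>\<bar> \<le> e / 2)"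
    using heat_quotient_uniform[OF f, of "e / 2"] e by auto
  have fC: "f \<in> CS1" by (rule C2S1_CS1[OF f])
  show "\<forall>\<^sub>F h in at_right 0. dist ((Heat h (Cper f) - Cper f) /\<^sub>R h) (Cper (\<lambda>\<theta>. \<sigma> * deriv (deriv f) \<theta>)) < e"
    unfolding eventually_at_right_field
  proof (intro exI[of _ d] conjI allI impI)
    show "0 < d" by (rule d)
    fix h :: real assume h: "0 < h" "h < d"
    have "norm ((Heat h (Cper f) - Cper f) /\<^sub>R h - Cper (\<lambda>\<theta>. \<sigma> * deriv (deriv f) \<theta>)) \<le> e / 2"
    proof (rule norm_cper_bound)
      fix \<theta>
      have "apply_cper ((Heat h (Cper f) - Cper f) /\<^sub>R h - Cper (\<lambda>\<theta>. \<sigma> * deriv (deriv f) \<theta>)) \<theta>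
          = (heat h f \<theta> - f \<theta>) / h - \<sigma> * deriv (deriv f) \<theta>"
        by (simp only: apply_cper_diff apply_cper_divide apply_Heat apply_cper_Cper[OF fC] apply_cper_Cper[OF C2S1_deriv2_CS1[OF f]])
      then show "\<bar>apply_cper ((Heat h (Cper f) - Cper f) /\<^sub>R h - Cper (\<lambda>\<theta>. \<sigma> * deriv (deriv f) \<theta>)) \<theta>\<bar> \<le> e / 2"
        using dd h by simp
    qed
    then show "dist ((Heat h (Cper f) - Cper f) /\<^sub>R h) (Cper (\<lambda>\<theta>. \<sigma> * deriv (deriv f) \<theta>)) < e"
      using e by (simp add: dist_norm)
  qed
qed

lemma Heat_const: "Heat t (c *\<^sub>R cper_one) = c *\<^sub>R cper_one"
  by (rule cper_eqI) (simp add: apply_Heat apply_cper_one apply_cper_scaleR_fun heat_const)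

lemma Heat_generator_domain:
  assumes lim: "((\<lambda>h. (Heat h x - x) /\<^sub>R h) \<longlongrightarrow> W) (at_right 0)"
  shows "apply_cper x \<in> C2S1"
proof -
  interpret G: contraction_semigroup Heat by (rule contraction_semigroup_Heat)
  define w where "w = apply_cper W"
  define m where "m = integral {0..2*pi} w / (2*pi)"
  obtain z where z: "z \<in> C2S1" and zz: "\<And>\<theta>. \<sigma> * deriv (deriv z) \<theta> = w \<theta> - m"
    using C2S1_poisson_solvable[OF apply_cper_CS1 \<sigma>pos, of W] unfolding w_def m_def by blast
  have "Cper (\<lambda>\<theta>. \<sigma> * deriv (deriv z) \<theta>) = W - m *\<^sub>R cper_one"
    by (rule cper_eqI) (subst apply_cper_Cper[OF C2S1_deriv2_CS1[OF z]], simp add: zz apply_cper_one w_def)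
  then have limZ: "((\<lambda>h. (Heat h (Cper z) - Cper z) /\<^sub>R h) \<longlongrightarrow> W - m *\<^sub>R cper_one) (at_right 0)"
    using Heat_quotient_tendsto[OF z] by simp
  define V where "V = x - Cper z"
  have "(Heat h x - x) /\<^sub>R h - (Heat h (Cper z) - Cper z) /\<^sub>R h = (Heat h V - V) /\<^sub>R h" for h
    unfolding V_def by (simp add: Heat_diff scaleR_diff_right)
  then have "((\<lambda>h. (Heat h V - V) /\<^sub>R h) \<longlongrightarrow> m *\<^sub>R cper_one) (at_right 0)"
    using tendsto_diff[OF lim limZ] by simp
  then have "Heat 1 V = V" by (rule G.G_fixed_if_quotient_limit_fixed) (simp_all add: Heat_const)
  then obtain c where c: "\<And>\<theta>. apply_cper V \<theta> = c"
    using heat_fixed_imp_const[OF apply_cper_CS1, of 1 V] by (auto simp: apply_Heat[symmetric])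
  have "apply_cper x = (\<lambda>\<theta>. z \<theta> + c)"
    using c apply_cper_Cper[OF C2S1_CS1[OF z]] by (auto simp: V_def fun_eq_iff algebra_simps)
  then show ?thesis using C2S1_add_const[OF z] by simp
qed

end

section \<open>The perturbed heat semigroup\<close>

lemma supn_tendsto_0_if_uniform_limit:
  fixes F :: "nat \<Rightarrow> real \<Rightarrow> real"
  assumes F: "\<And>n. F n \<in> CS1" and y: "y \<in> CS1" and lim: "uniform_limit UNIV F y sequentially"
  shows "(\<lambda>n. supn (\<lambda>\<theta>. F n \<theta> - y \<theta>)) \<longlonglongrightarrow> 0"
proof (rule tendstoI)
  fix e :: real assume e: "e > 0"
  have "\<forall>\<^sub>F n in sequentially. \<forall>\<theta>\<in>UNIV. dist (F n \<theta>) (y \<theta>) < e / 2"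
    by (rule uniform_limitD[OF lim]) (use e in simp)
  then show "\<forall>\<^sub>F n in sequentially. dist (supn (\<lambda>\<theta>. F n \<theta> - y \<theta>)) 0 < e"
  proof eventually_elim
    case (elim n)
    have dC: "(\<lambda>\<theta>. F n \<theta> - y \<theta>) \<in> CS1" using F[of n] y
      by (auto simp: CS1_def intro!: continuous_intros)
    have "supn (\<lambda>\<theta>. F n \<theta> - y \<theta>) \<le> e / 2"
      by (rule supn_le[OF dC]) (use elim in \<open>auto simp: dist_real_def less_imp_le\<close>)
    then show ?case using supn_nonneg[OF dC] e by simp
  qed
qed

lemma CS1_Arzela_Ascoli:
  fixes F :: "nat \<Rightarrow> real \<Rightarrow> real"
  assumes F: "\<And>n. F n \<in> CS1" and bound: "\<And>n x. \<bar>F n x\<bar> \<le> M"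
    and equi: "\<And>x e. e > 0 \<Longrightarrow> \<exists>d>0. \<forall>n y. \<bar>x - y\<bar> < d \<longrightarrow> \<bar>F n x - F n y\<bar> < e"
  shows "\<exists>r y. strict_mono r \<and> y \<in> CS1 \<and> (\<lambda>n. supn (\<lambda>\<theta>. F (r n) \<theta> - y \<theta>)) \<longlonglongrightarrow> 0"
proof -
  obtain g r where r: "strict_mono (r :: nat \<Rightarrow> nat)"
    and conv: "\<And>e. 0 < e \<Longrightarrow> \<exists>N. \<forall>n x. n \<ge> N \<and> x \<in> {0..2*pi} \<longrightarrow> norm (F (r n) x - g x) < e"
    using Arzela_Ascoli[of "{0..2*pi}" F M] bound equi by (metis compact_Icc real_norm_def)
  define y where "y = (\<lambda>\<theta>. g (wrap \<theta>))"
  have "uniform_limit UNIV (\<lambda>n. F (r n)) y sequentially"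
    unfolding uniform_limit_sequentially_iff dist_real_def
  proof (intro allI impI)
    fix e :: real assume "e > 0"
    then obtain N where N: "\<And>n x. n \<ge> N \<Longrightarrow> x \<in> {0..2*pi} \<Longrightarrow> norm (F (r n) x - g x) < e"
      using conv by blast
    have "\<bar>F (r n) \<theta> - y \<theta>\<bar> < e" if "n \<ge> N" for n \<theta>
      using N[OF that, of "wrap \<theta>"] CS1_wrap[OF F, of "r n" \<theta>] wrap_in_period[of \<theta>]
        by (simp add: y_def)
    then show "\<exists>N. \<forall>n\<ge>N. \<forall>\<theta>\<in>UNIV. \<bar>F (r n) \<theta> - y \<theta>\<bar> < e"
      by blast
  qed
  moreover from this have "continuous_on UNIV y"
    by (rule uniform_limit_theorem[rotated]) (use F in \<open>auto simp: CS1_def\<close>)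
  then have "y \<in> CS1" by (simp add: CS1_def y_def wrap_periodic)
  ultimately show ?thesis using r supn_tendsto_0_if_uniform_limit[OF F] by blast
qed

lemma generator_CS1_cong:
  assumes "generator_CS1 T D G" and "\<And>f. f \<in> D \<Longrightarrow> G' f = G f"
  shows "generator_CS1 T D G'"
  using assms unfolding generator_CS1_def by auto

locale perturbed_heat = heat_circle \<sigma> + bounded_perturbation "heat_circle.Heat \<sigma>" P K for \<sigma> P K
begin

(* Smoothing by the heat semigroup over a short final time \<epsilon>, up to an O(\<epsilon>) error coming from
   the perturbation, makes the orbits of the unit ball equicontinuous. *)

lemma mild_equicontinuous:
  assumes t: "t > 0" and e: "e > 0"
  shows "\<exists>d>0. \<forall>x \<theta> \<theta>'. norm x \<le> 1 \<longrightarrow> \<bar>\<theta> - \<theta>'\<bar> < d \<longrightarrow>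
    \<bar>apply_cper (mild x t) \<theta> - apply_cper (mild x t) \<theta>'\<bar> < e"
proof -
  define M where "M = exp (K * t)"
  have M: "M > 0" unfolding M_def by simp
  define \<epsilon> where "\<epsilon> = min t (e / 4 / (K * M + 1))"
  have \<epsilon>: "\<epsilon> > 0" "\<epsilon> \<le> t" unfolding \<epsilon>_def using t e K_pos M
    by (auto simp: add_pos_nonneg)
  have KM: "\<epsilon> * K * M \<le> e / 4"
  proof -
    have "\<epsilon> \<le> e / 4 / (K * M + 1)" unfolding \<epsilon>_def by simp
    have "\<epsilon> * K * M = \<epsilon> * (K * M)" by simp
    also have "\<dots> \<le> e / 4 / (K * M + 1) * (K * M)"
      by (rule mult_right_mono) (use \<open>\<epsilon> \<le> e / 4 / (K * M + 1)\<close> K_pos M in auto)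
    also have "\<dots> < e / 4" using mult_divide_add1_less[of "K * M" "e / 4"] K_pos M e by (simp add: mult.commute)
    finally show ?thesis by simp
  qed
  obtain d where d: "d > 0" and dd: "\<And>s. \<bar>s\<bar> < d \<Longrightarrow> shift_L1 \<epsilon> s \<le> e / 4 / (M + 1)"
    using shift_L1_small[OF \<epsilon>(1), of "e / 4 / (M + 1)"] e M by auto
  have "\<bar>apply_cper (mild x t) \<theta> - apply_cper (mild x t) \<theta>'\<bar> < e"
    if x: "norm x \<le> 1" and close: "\<bar>\<theta> - \<theta>'\<bar> < d" for x \<theta> \<theta>'
  proof -
    define V where "V = mild x (t - \<epsilon>)"
    define R where "R = mild x t - Heat \<epsilon> V"
    have "norm R \<le> \<epsilon> * K * exp (K * t) * norm x"
      unfolding R_def V_def by (rule norm_mild_minus_G_shift_le) (use \<epsilon> in auto)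
    also have "\<dots> \<le> \<epsilon> * K * M" unfolding M_def using x \<epsilon> K_pos by (simp add: mult_left_le)
    finally have nR: "norm R \<le> e / 4" using KM by simp
    have nV: "\<bar>apply_cper V z\<bar> \<le> M" for z
      using abs_apply_cper_le_norm[of V z] norm_mild_le_exp[OF x, of "t - \<epsilon>" t] \<epsilon>
      unfolding V_def M_def by simp
    have "\<bar>heat \<epsilon> (apply_cper V) \<theta> - heat \<epsilon> (apply_cper V) \<theta>'\<bar> \<le> M * shift_L1 \<epsilon> (\<theta> - \<theta>')"
      by (rule abs_heat_diff_le_shift_L1[OF \<epsilon>(1) apply_cper_CS1 nV])
    also have "\<dots> \<le> M * (e / 4 / (M + 1))" using dd[OF close] M by (intro mult_left_mono) auto
    also have "\<dots> < e / 4" using mult_divide_add1_less[of M "e / 4"] M e by simp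
    finally have h: "\<bar>heat \<epsilon> (apply_cper V) \<theta> - heat \<epsilon> (apply_cper V) \<theta>'\<bar> < e / 4" .
    have split: "apply_cper (mild x t) z = heat \<epsilon> (apply_cper V) z + apply_cper R z" for z
      unfolding R_def by (simp add: apply_Heat)
    have "\<bar>apply_cper (mild x t) \<theta> - apply_cper (mild x t) \<theta>'\<bar>
        \<le> \<bar>heat \<epsilon> (apply_cper V) \<theta> - heat \<epsilon> (apply_cper V) \<theta>'\<bar> + \<bar>apply_cper R \<theta>\<bar> + \<bar>apply_cper R \<theta>'\<bar>"
      unfolding split by simp
    then show ?thesis using h abs_apply_cper_le_norm[of R \<theta>] abs_apply_cper_le_norm[of R \<theta>'] nR
      by linarith
  qed
  then show ?thesis using d by blast
qed

lemma compact_op_mild: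
  assumes t: "t > 0"
  shows "compact_op_CS1 (\<lambda>f. apply_cper (mild (Cper f) t))"
  unfolding compact_op_CS1_def
proof (intro allI impI)
  fix us :: "nat \<Rightarrow> real \<Rightarrow> real"
  assume us: "\<forall>n. us n \<in> CS1 \<and> supn (us n) \<le> 1"
  have unit: "norm (Cper (us n)) \<le> 1" for n
  proof -
    have "us n \<in> CS1" "supn (us n) \<le> 1" using us by auto
    then show ?thesis using supn_apply_cper[of "Cper (us n)"] apply_cper_Cper[of "us n"] by simp
  qed
  have bound: "\<bar>apply_cper (mild (Cper (us n)) t) \<theta>\<bar> \<le> exp (K * t)" for n \<theta>
    using abs_apply_cper_le_norm norm_mild_le_exp[OF unit, of t t] t order_trans by fastforce
  show "\<exists>r y. strict_mono r \<and> y \<in> CS1 \<and> (\<lambda>n. supn (\<lambda>\<theta>. apply_cper (mild (Cper (us (r n))) t) \<theta> - y \<theta>)) \<longlonglongrightarrow> 0"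
  proof (rule CS1_Arzela_Ascoli[OF apply_cper_CS1 bound])
    fix \<theta> e :: real assume "e > 0"
    then obtain d where "d > 0" and "\<forall>x \<theta> \<theta>'. norm x \<le> 1 \<longrightarrow> \<bar>\<theta> - \<theta>'\<bar> < d \<longrightarrow>
        \<bar>apply_cper (mild x t) \<theta> - apply_cper (mild x t) \<theta>'\<bar> < e"
      using mild_equicontinuous[OF t] by blast
    then show "\<exists>d>0. \<forall>n \<theta>'. \<bar>\<theta> - \<theta>'\<bar> < d \<longrightarrow>
        \<bar>apply_cper (mild (Cper (us n)) t) \<theta> - apply_cper (mild (Cper (us n)) t) \<theta>'\<bar> < e"
      using unit by blast
  qed
qed

lemma supn_quotient_tendsto_iff:
  assumes x: "x \<in> CS1" and y: "y \<in> CS1"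
  shows "((\<lambda>t. supn (\<lambda>\<theta>. (apply_cper (mild (Cper x) t) \<theta> - x \<theta>) / t - y \<theta>)) \<longlongrightarrow> 0) (at_right 0)
     \<longleftrightarrow> ((\<lambda>t. (mild (Cper x) t - Cper x) /\<^sub>R t) \<longlongrightarrow> Cper y) (at_right 0)"
proof -
  have "(\<lambda>\<theta>. (apply_cper (mild (Cper x) t) \<theta> - x \<theta>) / t - y \<theta>) = apply_cper ((mild (Cper x) t - Cper x) /\<^sub>R t - Cper y)" for t
    by (rule ext) (simp add: apply_cper_Cper[OF x] apply_cper_Cper[OF y] divide_inverse mult.commute)
  then have "supn (\<lambda>\<theta>. (apply_cper (mild (Cper x) t) \<theta> - x \<theta>) / t - y \<theta>) = norm ((mild (Cper x) t - Cper x) /\<^sub>R t - Cper y)" for t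
    by (simp add: supn_apply_cper)
  then show ?thesis by (simp add: tendsto_norm_zero_iff LIM_zero_iff)
qed

lemma mild_quotient_tendsto:
  assumes f: "f \<in> C2S1"
  shows "((\<lambda>t. (mild (Cper f) t - Cper f) /\<^sub>R t) \<longlongrightarrow> Cper (\<lambda>\<theta>. \<sigma> * deriv (deriv f) \<theta>) + P (Cper f)) (at_right 0)"
proof -
  have "(mild (Cper f) t - Cper f) /\<^sub>R t
      = (Heat t (Cper f) - Cper f) /\<^sub>R t + (mild (Cper f) t - Heat t (Cper f)) /\<^sub>R t" for t
    by (simp add: algebra_simps scaleR_diff_right)
  then show ?thesis using tendsto_add[OF Heat_quotient_tendsto[OF f] mild_minus_G_quotient_tendsto] by simp
qed

lemma mild_quotient_tendsto_imp_C2S1: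
  assumes "((\<lambda>t. (mild X t - X) /\<^sub>R t) \<longlongrightarrow> Y) (at_right 0)"
  shows "apply_cper X \<in> C2S1"
proof (rule Heat_generator_domain)
  have "((\<lambda>t. (mild X t - X) /\<^sub>R t - (mild X t - Heat t X) /\<^sub>R t) \<longlongrightarrow> Y - P X) (at_right 0)"
    by (rule tendsto_diff[OF assms mild_minus_G_quotient_tendsto])
  moreover have "(mild X t - X) /\<^sub>R t - (mild X t - Heat t X) /\<^sub>R t = (Heat t X - X) /\<^sub>R t" for t
    by (simp add: algebra_simps scaleR_diff_right)
  ultimately show "((\<lambda>h. (Heat h X - X) /\<^sub>R h) \<longlongrightarrow> Y - P X) (at_right 0)" by simp
qed

definition mild_CS1 :: "real \<Rightarrow> (real \<Rightarrow> real) \<Rightarrow> real \<Rightarrow> real" where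
  "mild_CS1 t f = apply_cper (mild (Cper f) t)"

lemma bounded_linear_CS1_mild_CS1:
  assumes t: "t \<ge> 0"
  shows "bounded_linear_CS1 (mild_CS1 t)"
  unfolding bounded_linear_CS1_def
proof (intro conjI ballI allI)
  fix x assume "x \<in> CS1" show "mild_CS1 t x \<in> CS1" unfolding mild_CS1_def by (rule apply_cper_CS1)
next
  fix x y a b assume x: "x \<in> CS1" and y: "y \<in> CS1"
  have "Cper (\<lambda>\<theta>. a * x \<theta> + b * y \<theta>) = a *\<^sub>R Cper x + b *\<^sub>R Cper y"
    using x y by (intro cper_eqI) (simp add: apply_cper_Cper CS1_def continuous_intros)
  then show "mild_CS1 t (\<lambda>\<theta>. a * x \<theta> + b * y \<theta>) = (\<lambda>\<theta>. a * mild_CS1 t x \<theta> + b * mild_CS1 t y \<theta>)"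
    unfolding mild_CS1_def by (simp add: mild_linear[OF t] apply_cper_add_fun apply_cper_scaleR_fun)
next
  have "supn (mild_CS1 t x) \<le> exp (K * t) * supn x" if x: "x \<in> CS1" for x
    using norm_mild_le[OF t, of "Cper x"] supn_apply_cper[of "Cper x"]
    by (simp add: mild_CS1_def supn_apply_cper apply_cper_Cper[OF x] mult.commute)
  then show "\<exists>M. \<forall>x\<in>CS1. supn (mild_CS1 t x) \<le> M * supn x" by blast
qed

lemma C0_semigroup_mild_CS1: "C0_semigroup_CS1 mild_CS1"
  unfolding C0_semigroup_CS1_def
proof (intro conjI allI impI ballI)
  fix x assume x: "x \<in> CS1"
  show "mild_CS1 0 x = x" unfolding mild_CS1_def mild_0 by (rule apply_cper_Cper[OF x])
  have "(\<lambda>\<theta>. mild_CS1 t x \<theta> - x \<theta>) = apply_cper (mild (Cper x) t - Cper x)" for t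
    by (rule ext) (simp add: mild_CS1_def apply_cper_Cper[OF x])
  then have "supn (\<lambda>\<theta>. mild_CS1 t x \<theta> - x \<theta>) = norm (mild (Cper x) t - Cper x)" for t
    by (simp add: supn_apply_cper)
  then show "((\<lambda>t. supn (\<lambda>\<theta>. mild_CS1 t x \<theta> - x \<theta>)) \<longlongrightarrow> 0) (at_right 0)"
    using mild_tendsto_0 by (simp add: tendsto_norm_zero_iff LIM_zero_iff)
next
  fix t s :: real and x assume "t \<ge> 0" "s \<ge> 0"
  then show "mild_CS1 (t + s) x = mild_CS1 t (mild_CS1 s x)"
    unfolding mild_CS1_def Cper_apply_cper by (simp add: mild_semigroup)
qed (rule bounded_linear_CS1_mild_CS1)

lemma mild_CS1_quotient_tendsto:
  assumes f: "f \<in> C2S1"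
  shows "((\<lambda>t. supn (\<lambda>\<theta>. (mild_CS1 t f \<theta> - f \<theta>) / t
      - (\<sigma> * deriv (deriv f) \<theta> + apply_cper (P (Cper f)) \<theta>))) \<longlongrightarrow> 0) (at_right 0)"
proof -
  have gen_CS1: "(\<lambda>\<theta>. \<sigma> * deriv (deriv f) \<theta> + apply_cper (P (Cper f)) \<theta>) \<in> CS1"
    by (rule CS1_add[OF C2S1_deriv2_CS1[OF f] apply_cper_CS1])
  have "Cper (\<lambda>\<theta>. \<sigma> * deriv (deriv f) \<theta> + apply_cper (P (Cper f)) \<theta>)
      = Cper (\<lambda>\<theta>. \<sigma> * deriv (deriv f) \<theta>) + P (Cper f)"
    by (rule cper_eqI) (simp add: apply_cper_Cper[OF gen_CS1] apply_cper_Cper[OF C2S1_deriv2_CS1[OF f]])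
  then show ?thesis
    unfolding mild_CS1_def supn_quotient_tendsto_iff[OF C2S1_CS1[OF f] gen_CS1]
    using mild_quotient_tendsto[OF f] by simp
qed

lemma generator_mild_CS1:
  "generator_CS1 mild_CS1 C2S1 (\<lambda>f \<theta>. \<sigma> * deriv (deriv f) \<theta> + apply_cper (P (Cper f)) \<theta>)"
proof -
  have gen_CS1: "(\<lambda>\<theta>. \<sigma> * deriv (deriv f) \<theta> + apply_cper (P (Cper f)) \<theta>) \<in> CS1" if f: "f \<in> C2S1" for f
    by (rule CS1_add[OF C2S1_deriv2_CS1[OF f] apply_cper_CS1])
  have domain: "f \<in> C2S1"
    if f: "f \<in> CS1" and y: "y \<in> CS1"
      and lim: "((\<lambda>t. supn (\<lambda>\<theta>. (mild_CS1 t f \<theta> - f \<theta>) / t - y \<theta>)) \<longlongrightarrow> 0) (at_right 0)" for f y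
  proof -
    have "apply_cper (Cper f) \<in> C2S1"
      using lim unfolding mild_CS1_def supn_quotient_tendsto_iff[OF f y] by (rule mild_quotient_tendsto_imp_C2S1)
    then show ?thesis using apply_cper_Cper[OF f] by simp
  qed
  show ?thesis
    unfolding generator_CS1_def
  proof (intro conjI ballI)
    fix f assume f: "f \<in> CS1"
    show "f \<in> C2S1 \<longleftrightarrow> (\<exists>y\<in>CS1. ((\<lambda>t. supn (\<lambda>\<theta>. (mild_CS1 t f \<theta> - f \<theta>) / t - y \<theta>)) \<longlongrightarrow> 0) (at_right 0))"
    proof
      assume "f \<in> C2S1"
      then show "\<exists>y\<in>CS1. ((\<lambda>t. supn (\<lambda>\<theta>. (mild_CS1 t f \<theta> - f \<theta>) / t - y \<theta>)) \<longlongrightarrow> 0) (at_right 0)"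
        using mild_CS1_quotient_tendsto gen_CS1 by (intro bexI)
    next
      assume "\<exists>y\<in>CS1. ((\<lambda>t. supn (\<lambda>\<theta>. (mild_CS1 t f \<theta> - f \<theta>) / t - y \<theta>)) \<longlongrightarrow> 0) (at_right 0)"
      then obtain y where "y \<in> CS1" "((\<lambda>t. supn (\<lambda>\<theta>. (mild_CS1 t f \<theta> - f \<theta>) / t - y \<theta>)) \<longlongrightarrow> 0) (at_right 0)"
        by (elim bexE)
      then show "f \<in> C2S1" by (rule domain[OF f])
    qed
  next
    show "C2S1 \<subseteq> CS1" using C2S1_CS1 by (rule subsetI)
  qed (rule gen_CS1 mild_CS1_quotient_tendsto; assumption)+
qed

lemma compact_op_mild_CS1: "t > 0 \<Longrightarrow> compact_op_CS1 (mild_CS1 t)"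
  unfolding mild_CS1_def[abs_def] by (rule compact_op_mild)

end

definition mult_rank_one :: "(real \<Rightarrow> real) \<Rightarrow> (real \<Rightarrow> real) \<Rightarrow> (real \<Rightarrow> real) \<Rightarrow> (real \<Rightarrow> real) \<Rightarrow> real \<Rightarrow> real" where
  "mult_rank_one A k b x = (\<lambda>\<theta>. A \<theta> * x \<theta> - k \<theta> * integral {0..2*pi} (\<lambda>\<xi>. x \<xi> * b \<xi>))"

lemma mult_rank_one_CS1:
  assumes A: "A \<in> CS1" and k: "k \<in> CS1" and x: "x \<in> CS1"
  shows "mult_rank_one A k b x \<in> CS1"
  using A k x unfolding mult_rank_one_def CS1_def by (auto intro!: continuous_intros)

definition Mult_rank_one :: "(real \<Rightarrow> real) \<Rightarrow> (real \<Rightarrow> real) \<Rightarrow> (real \<Rightarrow> real) \<Rightarrow> cper \<Rightarrow> cper" where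
  "Mult_rank_one A k b x = Cper (mult_rank_one A k b (apply_cper x))"

lemma apply_Mult_rank_one: "A \<in> CS1 \<Longrightarrow> k \<in> CS1 \<Longrightarrow> apply_cper (Mult_rank_one A k b x) = mult_rank_one A k b (apply_cper x)"
  unfolding Mult_rank_one_def by (rule apply_cper_Cper[OF mult_rank_one_CS1[OF _ _ apply_cper_CS1]])

lemma integral_linear_combination:
  assumes b: "b \<in> CS1"
  shows "integral {0..2*pi} (\<lambda>\<xi>. (a * apply_cper x \<xi> + c * apply_cper y \<xi>) * b \<xi>)
       = a * integral {0..2*pi} (\<lambda>\<xi>. apply_cper x \<xi> * b \<xi>) + c * integral {0..2*pi} (\<lambda>\<xi>. apply_cper y \<xi> * b \<xi>)"
proof -
  have ix: "(\<lambda>\<xi>. apply_cper x \<xi> * b \<xi>) integrable_on {0..2*pi}"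
    by (rule CS1_integrable_on) (use b apply_cper_CS1[of x] in \<open>auto simp: CS1_def intro!: continuous_intros\<close>)
  have iy: "(\<lambda>\<xi>. apply_cper y \<xi> * b \<xi>) integrable_on {0..2*pi}"
    by (rule CS1_integrable_on) (use b apply_cper_CS1[of y] in \<open>auto simp: CS1_def intro!: continuous_intros\<close>)
  have "(\<lambda>\<xi>. (a * apply_cper x \<xi> + c * apply_cper y \<xi>) * b \<xi>) = (\<lambda>\<xi>. a *\<^sub>R (apply_cper x \<xi> * b \<xi>) + c *\<^sub>R (apply_cper y \<xi> * b \<xi>))"
    by (auto simp: algebra_simps)
  then show ?thesis
    using integral_add[OF integrable_cmul[OF ix, of a] integrable_cmul[OF iy, of c]] by simp
qed

lemma Mult_rank_one_linear:
  assumes A: "A \<in> CS1" and k: "k \<in> CS1" and b: "b \<in> CS1"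
  shows "Mult_rank_one A k b (a *\<^sub>R x + c *\<^sub>R y) = a *\<^sub>R Mult_rank_one A k b x + c *\<^sub>R Mult_rank_one A k b y"
proof (rule cper_eqI)
  fix \<theta>
  have e: "apply_cper (a *\<^sub>R x + c *\<^sub>R y) = (\<lambda>\<xi>. a * apply_cper x \<xi> + c * apply_cper y \<xi>)"
    by (rule ext) simp
  have "mult_rank_one A k b (\<lambda>\<xi>. a * apply_cper x \<xi> + c * apply_cper y \<xi>) \<theta> = A \<theta> * (a * apply_cper x \<theta> + c * apply_cper y \<theta>)
     - k \<theta> * (a * integral {0..2*pi} (\<lambda>\<xi>. apply_cper x \<xi> * b \<xi>) + c * integral {0..2*pi} (\<lambda>\<xi>. apply_cper y \<xi> * b \<xi>))"
    by (simp only: mult_rank_one_def integral_linear_combination[OF b])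
  then show "apply_cper (Mult_rank_one A k b (a *\<^sub>R x + c *\<^sub>R y)) \<theta> = apply_cper (a *\<^sub>R Mult_rank_one A k b x + c *\<^sub>R Mult_rank_one A k b y) \<theta>"
    by (simp add: apply_Mult_rank_one[OF A k] e) (simp add: mult_rank_one_def algebra_simps)
qed

lemma norm_Mult_rank_one_le:
  assumes A: "A \<in> CS1" and k: "k \<in> CS1" and b: "b \<in> CS1"
    and MA: "\<And>\<theta>. \<bar>A \<theta>\<bar> \<le> MA" and Mk: "\<And>\<theta>. \<bar>k \<theta>\<bar> \<le> Mk" and Mb: "\<And>\<theta>. \<bar>b \<theta>\<bar> \<le> Mb"
  shows "norm (Mult_rank_one A k b x) \<le> (MA + Mk * (Mb * (2*pi))) * norm x"
proof (rule norm_cper_bound)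
  fix \<theta>
  have Mb0: "Mb \<ge> 0" using Mb[of 0] by simp
  have Mk0: "Mk \<ge> 0" using Mk[of 0] by simp
  have I: "\<bar>integral {0..2*pi} (\<lambda>\<xi>. apply_cper x \<xi> * b \<xi>)\<bar> \<le> (norm x * Mb) * (2*pi - 0)"
  proof -
    have "norm (integral {0..2*pi} (\<lambda>\<xi>. apply_cper x \<xi> * b \<xi>)) \<le> (norm x * Mb) * (2*pi - 0)"
    proof (rule integral_bound)
      show "continuous_on {0..2*pi} (\<lambda>\<xi>. apply_cper x \<xi> * b \<xi>)"
        using b apply_cper_CS1[of x] continuous_on_subset by (auto simp: CS1_def intro!: continuous_intros)
      fix \<xi> show "norm (apply_cper x \<xi> * b \<xi>) \<le> norm x * Mb"
        using abs_apply_cper_le_norm[of x \<xi>] Mb[of \<xi>] by (simp add: abs_mult mult_mono)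
    qed simp
    then show ?thesis by simp
  qed
  have "\<bar>apply_cper (Mult_rank_one A k b x) \<theta>\<bar> \<le> \<bar>A \<theta>\<bar> * \<bar>apply_cper x \<theta>\<bar> + \<bar>k \<theta>\<bar> * \<bar>integral {0..2*pi} (\<lambda>\<xi>. apply_cper x \<xi> * b \<xi>)\<bar>"
    by (simp add: apply_Mult_rank_one[OF A k] mult_rank_one_def abs_mult[symmetric] abs_triangle_ineq4)
  also have "\<dots> \<le> MA * norm x + Mk * ((norm x * Mb) * (2*pi - 0))"
    using MA[of \<theta>] abs_apply_cper_le_norm[of x \<theta>] Mk[of \<theta>] I by (intro add_mono mult_mono) auto
  also have "\<dots> = (MA + Mk * (Mb * (2*pi))) * norm x" by (simp add: algebra_simps)
  finally show "\<bar>apply_cper (Mult_rank_one A k b x) \<theta>\<bar> \<le> (MA + Mk * (Mb * (2*pi))) * norm x" .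
qed

lemma Mult_rank_one_bounded:
  assumes A: "A \<in> CS1" and k: "k \<in> CS1" and b: "b \<in> CS1"
  obtains K where "K > 0" "bounded_linear (Mult_rank_one A k b)" "\<And>x. norm (Mult_rank_one A k b x) \<le> K * norm x"
proof -
  obtain MA Mk Mb where MA: "\<And>\<theta>. \<bar>A \<theta>\<bar> \<le> MA" and Mk: "\<And>\<theta>. \<bar>k \<theta>\<bar> \<le> Mk" and Mb: "\<And>\<theta>. \<bar>b \<theta>\<bar> \<le> Mb"
    using CS1_bounded_abs[OF A] CS1_bounded_abs[OF k] CS1_bounded_abs[OF b] by metis
  define K where "K = MA + Mk * (Mb * (2*pi)) + 1"
  have K: "K > 0" unfolding K_def using MA[of 0] Mk[of 0] Mb[of 0] by (simp add: add_nonneg_pos)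
  have bound: "norm (Mult_rank_one A k b x) \<le> K * norm x" for x
    using norm_Mult_rank_one_le[OF A k b MA Mk Mb, of x] unfolding K_def
    by (smt (verit) mult_right_mono norm_ge_zero)
  have "bounded_linear (Mult_rank_one A k b)"
  proof (rule bounded_linear_intro[where K=K])
    fix x y show "Mult_rank_one A k b (x + y) = Mult_rank_one A k b x + Mult_rank_one A k b y"
      using Mult_rank_one_linear[OF A k b, of 1 x 1 y] by simp
    fix r show "Mult_rank_one A k b (r *\<^sub>R x) = r *\<^sub>R Mult_rank_one A k b x"
      using Mult_rank_one_linear[OF A k b, of r x 0 x] by simp
  qed (simp add: bound mult.commute)
  then show ?thesis using that K bound by blast
qed

lemma powr_weight_CS1:
  assumes b: "b \<in> CS1" and \<eta>: "\<eta> \<in> CS1" and b_pos: "\<forall>\<theta>. b \<theta> > 0" and \<eta>_pos: "\<forall>\<theta>. \<eta> \<theta> > 0"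
    and \<alpha>: "\<alpha> \<ge> 0"
  shows "(\<lambda>\<theta>. (\<alpha> * b \<theta>) powr p * \<eta> \<theta> powr r) \<in> CS1"
proof (cases "\<alpha> = 0")
  case True
  then show ?thesis by (simp add: CS1_def)
next
  case False
  then have "\<alpha> > 0" using \<alpha> by simp
  moreover have "b \<theta> \<noteq> 0" "\<eta> \<theta> \<noteq> 0" for \<theta> using b_pos \<eta>_pos
    by (metis less_irrefl)+
  ultimately show ?thesis
    using b \<eta> by (auto simp: CS1_def intro!: continuous_intros)
qed

lemma Bop_eq_mult_rank_one:
  "Bop \<sigma> A \<alpha> q \<gamma> \<eta> b f = (\<lambda>\<theta>. \<sigma> * deriv (deriv f) \<theta>
     + mult_rank_one A (\<lambda>\<theta>. (\<alpha> * b \<theta>) powr (-1 / \<gamma>) * \<eta> \<theta> powr ((q + \<gamma> - 1) / \<gamma>)) b f \<theta>)"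
  unfolding Bop_def mult_rank_one_def by (rule ext) (simp add: algebra_simps)

theorem lemma5p9:
  fixes \<sigma> q \<gamma> \<rho> lam0 :: real and A \<eta> b0 :: "real \<Rightarrow> real"
  assumes "\<sigma> > 0"
    and "A \<in> CS1" and "\<forall>\<theta>. A \<theta> > 0"
    and "\<eta> \<in> CS1" and "\<forall>\<theta>. \<eta> \<theta> > 0"
    and "q \<ge> 0" and "\<gamma> > 0" and "\<gamma> \<noteq> 1"
    and "\<rho> > 0" and "\<rho> > lam0 * (1 - \<gamma>)"
    and "eigenpair \<sigma> A lam0 b0"
    and "\<forall>lam b. eigenpair \<sigma> A lam b \<longrightarrow> lam \<le> lam0"
    and "\<forall>\<theta>. b0 \<theta> > 0"
    and "integral {0..2*pi} (\<lambda>\<theta>. (b0 \<theta>)\<^sup>2) = 1"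
  shows "\<exists>T. C0_semigroup_CS1 T
           \<and> generator_CS1 T C2S1 (Bop \<sigma> A (alpha_const \<gamma> \<rho> lam0 q \<eta> b0) q \<gamma> \<eta> b0)
           \<and> (\<forall>t>0. compact_op_CS1 (T t))"
proof -
  (* Of alpha only alpha >= 0 matters. *)
  define \<alpha> where "\<alpha> = alpha_const \<gamma> \<rho> lam0 q \<eta> b0"
  define k where "k = (\<lambda>\<theta>. (\<alpha> * b0 \<theta>) powr (-1 / \<gamma>) * \<eta> \<theta> powr ((q + \<gamma> - 1) / \<gamma>))"
  have b0: "b0 \<in> CS1" using assms(11) by (simp add: eigenpair_def C2S1_def)
  have k: "k \<in> CS1"
    unfolding k_def using powr_weight_CS1[OF b0 assms(4) assms(13) assms(5)] by (simp add: \<alpha>_def alpha_const_def)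
  obtain K where K: "K > 0" "bounded_linear (Mult_rank_one A k b0)"
    "\<And>x. norm (Mult_rank_one A k b0 x) \<le> K * norm x"
    using Mult_rank_one_bounded[OF assms(2) k b0] by blast
  have heat: "heat_circle \<sigma>" using assms(1) by unfold_locales
  interpret perturbed_heat \<sigma> "Mult_rank_one A k b0" K
    using heat heat_circle.contraction_semigroup_Heat[OF heat] K
    by (intro perturbed_heat.intro bounded_perturbation.intro bounded_perturbation_axioms.intro) auto
  have "generator_CS1 mild_CS1 C2S1 (Bop \<sigma> A \<alpha> q \<gamma> \<eta> b0)"
    by (rule generator_CS1_cong[OF generator_mild_CS1])
      (simp add: apply_Mult_rank_one[OF assms(2) k] apply_cper_Cper C2S1_CS1, simp add: Bop_eq_mult_rank_one k_def)
  then show ?thesis using C0_semigroup_mild_CS1 compact_op_mild_CS1 unfolding \<alpha>_def by blast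
qed

end
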